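(* Assume (A1)–(A4). Let $\mathbf v\in C^1([0,T]\times\overline\Omega)^d$ with $\mathrm{div}_x\mathbf v=0$ in $Q$ and $\mathbf v\cdot\mathbf n=0$ on $(0,T)\times\partial\Omega$, and let $(\psi,\phi)$ be a nonnegative classical solution of the polymer–monomer system with velocity $\mathbf v$ and initial data $(\psi_0,\phi_0)$, $\phi_0\in L^\infty(\Omega)$. Then $$\operatorname{ess\,sup}_{t\in(0,T)}\|\phi(t)\|_{L^\infty(\Omega)}\le\max(K^2,\|\phi_0\|_{L^\infty(\Omega)}).$$
   Context: Fix $d\in\{2,3\}$, $T>0$, a bounded domain $\Omega\subset\mathbb{R}^d$ with $\mathcal C^{1,1}$ boundary and unit outward normal $\mathbf n$, $Q:=(0,T)\times\Omega$, $r_0>0$, constants $K>0$, $A_0>0$. $\mathbf D_x\mathbf v:=\frac12(\nabla_x\mathbf v+(\nabla_x\mathbf v)^T)$; $\beta(r,\mathbf v,\mathbf D_x\mathbf v)$ means $\beta(r,\mathbf v(t,x),\mathbf D_x\mathbf v(t,x))$. A classical solution of the polymer–monomer system with velocity $\mathbf v$ and initial data $(\psi_0,\phi_0)$ is a pair $\psi:[0,T]\times\overline\Omega\times[r_0,\infty)\to\mathbb{R}$, $\phi:[0,T]\times\overline\Omega\to\mathbb{R}$ such that: $\psi,\partial_t\psi,\partial_r\psi,\nabla_x\psi,\nabla_x^2\psi$ and $\phi,\partial_t\phi,\nabla_x\phi,\nabla_x^2\phi$ are continuous on the closed domains; for every $m\ge0$, $(1+r)^m(|\psi|+|\partial_t\psi|+|\partial_r\psi|+|\nabla_x\psi|+|\nabla_x^2\psi|)$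 is bounded; $\nabla_x\psi\cdot\mathbf n=0$ and $\nabla_x\phi\cdot\mathbf n=0$ on $\partial\Omega$; $\psi(0)=\psi_0$, $\phi(0)=\phi_0$; and $$\partial_t\psi+\mathbf v\cdot\nabla_x\psi+\tau(r)\phi\,\partial_r\psi-A(r)\Delta_x\psi=-\beta(r,\mathbf v,\mathbf D_x\mathbf v)\psi+2\int_r^\infty\beta(\tilde r,\mathbf v,\mathbf D_x\mathbf v)\kappa(r,\tilde r)\psi(t,x,\tilde r)\,d\tilde r,$$ $$\partial_t\phi+\mathbf v\cdot\nabla_x\phi-A_0\Delta_x\phi=-\phi\int_{r_0}^\infty\partial_r(r\tau(r))\psi\,dr+2\int_0^{r_0}r\int_{r_0}^\infty\beta(\tilde r,\mathbf v,\mathbf D_x\mathbf v)\kappa(r,\tilde r)\psi(t,x,\tilde r)\,d\tilde r\,dr.$$ Nonnegative means $\psi\ge0$, $\phi\ge0$. (A1) $A:(r_0,\infty)\to(0,\infty)$ continuous, nonincreasing, $\lim_{r\to\infty}A(r)=0$. (A2) $\tau:[r_0,\infty)\to[0,\infty)$ nondecreasing, bounded, globally Lipschitz, $\tau(r_0)=0$, $\tau'(r_0)>0$, $K^{-1}r_0\le\tau(r)+r\tau'(r)$ and $\tau(r)+\tau'(r)+r\tau'(r)+\tau(r)/r\le K$. (A3) $\beta:(r_0,\infty)\times\mathbb{R}^d\times\mathbb{R}^{d\times d}\to\mathbb{R}$ smooth, increasing in $r$, $0<\beta\le K$; $\eta(r):=\sup_{\mathbf u,\mathbf D}\partial_r\beta/\beta$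 is measurable, nonnegative, $(1+r)\eta(r)\le K$, $\int_{r_0}^\infty\eta\le K$. (A4) $\kappa(r,\tilde r)=1/\tilde r$ if $\tilde r>r_0$ and $0<r<\tilde r$; $\kappa=0$ otherwise. *)

theory Defs
  imports "HOL-Analysis.Analysis" "HOL-Probability.Essential_Supremum"
begin

fun iter_dd :: "'a::real_normed_vector list \<Rightarrow> ('a \<Rightarrow> real) \<Rightarrow> 'a \<Rightarrow> real" where
  "iter_dd [] f = f"
| "iter_dd (h # hs) f = (\<lambda>x. frechet_derivative (iter_dd hs f) (at x) h)"

definition smooth_on :: "'a::real_normed_vector set \<Rightarrow> ('a \<Rightarrow> real) \<Rightarrow> bool" where
  "smooth_on S f \<longleftrightarrow> open S \<and>
     (\<forall>hs. continuous_on S (iter_dd hs f) \<and> (\<forall>x\<in>S. iter_dd hs f differentiable (at x)))"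

text \<open>Locally near every boundary point x0, Omega is the sublevel set {rho < 0} of a
  C^{1,1} defining function rho (differentiable, with Lipschitz gradient) whose gradient
  does not vanish; the unit outward normal at x0 is grad rho(x0) / |grad rho(x0)|.\<close>
definition C11_boundary_with_normal ::
    "(real^'n) set \<Rightarrow> (real^'n \<Rightarrow> real^'n) \<Rightarrow> bool" where
  "C11_boundary_with_normal \<Omega> nrm \<longleftrightarrow>
     (\<forall>x0\<in>frontier \<Omega>. \<exists>\<delta>>0. \<exists>(\<rho>::real^'n \<Rightarrow> real) (g::real^'n \<Rightarrow> real^'n) L.
        (\<forall>x\<in>ball x0 \<delta>. (\<rho> has_derivative (\<lambda>h. g x \<bullet> h)) (at x)) \<and>
        (\<forall>x\<in>ball x0 \<delta>. \<forall>y\<in>ball x0 \<delta>. norm (g x - g y) \<le> L * norm (x - y)) \<and>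
        (\<forall>x\<in>ball x0 \<delta>. g x \<noteq> 0) \<and>
        \<Omega> \<inter> ball x0 \<delta> = {x \<in> ball x0 \<delta>. \<rho> x < 0} \<and>
        nrm x0 = g x0 /\<^sub>R norm (g x0))"

definition bounded_C11_domain :: "(real^'n) set \<Rightarrow> (real^'n \<Rightarrow> real^'n) \<Rightarrow> bool" where
  "bounded_C11_domain \<Omega> nrm \<longleftrightarrow> open \<Omega> \<and> connected \<Omega> \<and> \<Omega> \<noteq> {} \<and> bounded \<Omega> \<and>
     C11_boundary_with_normal \<Omega> nrm"

definition symgrad :: "(real \<Rightarrow> real^'n \<Rightarrow> real^'n) \<Rightarrow> real \<Rightarrow> real^'n \<Rightarrow> real^'n^'n" where
  "symgrad v t x = (\<chi> i j. (jacobian (v t) (at x) $ i $ j + jacobian (v t) (at x) $ j $ i) / 2)"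

definition div_x :: "(real \<Rightarrow> real^'n \<Rightarrow> real^'n) \<Rightarrow> real \<Rightarrow> real^'n \<Rightarrow> real" where
  "div_x v t x = (\<Sum>i\<in>UNIV. jacobian (v t) (at x) $ i $ i)"

text \<open>v in C^1([0,T] x closure Omega)^d: continuous on the closed cylinder, with
  partial derivatives in the open cylinder that extend continuously to the closed one.\<close>
definition C1_closed_cyl :: "real \<Rightarrow> (real^'n) set \<Rightarrow> (real \<Rightarrow> real^'n \<Rightarrow> real^'n) \<Rightarrow> bool" where
  "C1_closed_cyl T \<Omega> v \<longleftrightarrow>
     (\<exists>(vt::real \<Rightarrow> real^'n \<Rightarrow> real^'n) (vx::real \<Rightarrow> real^'n \<Rightarrow> real^'n^'n).
        continuous_on ({0..T} \<times> closure \<Omega>) (\<lambda>(t,x). v t x) \<and>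
        continuous_on ({0..T} \<times> closure \<Omega>) (\<lambda>(t,x). vt t x) \<and>
        continuous_on ({0..T} \<times> closure \<Omega>) (\<lambda>(t,x). vx t x) \<and>
        (\<forall>t\<in>{0<..<T}. \<forall>x\<in>\<Omega>.
           ((\<lambda>s. v s x) has_vector_derivative vt t x) (at t) \<and>
           (v t has_derivative (\<lambda>h. vx t x *v h)) (at x)))"

definition Linf_norm :: "(real^'n) set \<Rightarrow> (real^'n \<Rightarrow> real) \<Rightarrow> ereal" where
  "Linf_norm \<Omega> f = esssup (restrict_space lborel \<Omega>) (\<lambda>x. ereal \<bar>f x\<bar>)"

definition in_Linf :: "(real^'n) set \<Rightarrow> (real^'n \<Rightarrow> real) \<Rightarrow> bool" where
  "in_Linf \<Omega> f \<longleftrightarrow> f \<in> borel_measurable (restrict_space lborel \<Omega>) \<and> Linf_norm \<Omega> f < \<infinity>"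

definition eta :: "(real \<Rightarrow> real^'n \<Rightarrow> real^'n^'n \<Rightarrow> real) \<Rightarrow> real \<Rightarrow> real" where
  "eta \<beta> r = Sup {deriv (\<lambda>s. \<beta> s u D) r / \<beta> r u D | u D. True}"

definition classical_solution ::
  "(real^'n) set \<Rightarrow> (real^'n \<Rightarrow> real^'n) \<Rightarrow> real \<Rightarrow> real \<Rightarrow> real
   \<Rightarrow> (real \<Rightarrow> real) \<Rightarrow> (real \<Rightarrow> real) \<Rightarrow> (real \<Rightarrow> real^'n \<Rightarrow> real^'n^'n \<Rightarrow> real)
   \<Rightarrow> (real \<Rightarrow> real \<Rightarrow> real)
   \<Rightarrow> (real \<Rightarrow> real^'n \<Rightarrow> real^'n)
   \<Rightarrow> (real^'n \<Rightarrow> real \<Rightarrow> real) \<Rightarrow> (real^'n \<Rightarrow> real)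
   \<Rightarrow> (real \<Rightarrow> real^'n \<Rightarrow> real \<Rightarrow> real) \<Rightarrow> (real \<Rightarrow> real^'n \<Rightarrow> real) \<Rightarrow> bool" where
  "classical_solution \<Omega> nrm T r0 A0 A \<tau> \<beta> \<kappa> v \<psi>0 \<phi>0 \<psi> \<phi> \<longleftrightarrow>
   (\<exists>(\<psi>t::real \<Rightarrow> real^'n \<Rightarrow> real \<Rightarrow> real) (\<psi>r::real \<Rightarrow> real^'n \<Rightarrow> real \<Rightarrow> real)
      (\<psi>x::real \<Rightarrow> real^'n \<Rightarrow> real \<Rightarrow> real^'n) (\<psi>xx::real \<Rightarrow> real^'n \<Rightarrow> real \<Rightarrow> real^'n^'n)
      (\<phi>t::real \<Rightarrow> real^'n \<Rightarrow> real) (\<phi>x::real \<Rightarrow> real^'n \<Rightarrow> real^'n)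
      (\<phi>xx::real \<Rightarrow> real^'n \<Rightarrow> real^'n^'n).
     \<comment> \<open>continuity on the closed domains\<close>
     continuous_on ({0..T} \<times> closure \<Omega> \<times> {r0..}) (\<lambda>(t,x,r). \<psi> t x r) \<and>
     continuous_on ({0..T} \<times> closure \<Omega> \<times> {r0..}) (\<lambda>(t,x,r). \<psi>t t x r) \<and>
     continuous_on ({0..T} \<times> closure \<Omega> \<times> {r0..}) (\<lambda>(t,x,r). \<psi>r t x r) \<and>
     continuous_on ({0..T} \<times> closure \<Omega> \<times> {r0..}) (\<lambda>(t,x,r). \<psi>x t x r) \<and>
     continuous_on ({0..T} \<times> closure \<Omega> \<times> {r0..}) (\<lambda>(t,x,r). \<psi>xx t x r) \<and>
     continuous_on ({0..T} \<times> closure \<Omega>) (\<lambda>(t,x). \<phi> t x) \<and>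
     continuous_on ({0..T} \<times> closure \<Omega>) (\<lambda>(t,x). \<phi>t t x) \<and>
     continuous_on ({0..T} \<times> closure \<Omega>) (\<lambda>(t,x). \<phi>x t x) \<and>
     continuous_on ({0..T} \<times> closure \<Omega>) (\<lambda>(t,x). \<phi>xx t x) \<and>
     \<comment> \<open>these are the partial derivatives (in the interior, extended continuously)\<close>
     (\<forall>t\<in>{0<..<T}. \<forall>x\<in>\<Omega>. \<forall>r\<in>{r0<..}.
        ((\<lambda>s. \<psi> s x r) has_real_derivative \<psi>t t x r) (at t) \<and>
        ((\<lambda>s. \<psi> t x s) has_real_derivative \<psi>r t x r) (at r) \<and>
        ((\<lambda>y. \<psi> t y r) has_derivative (\<lambda>h. \<psi>x t x r \<bullet> h)) (at x) \<and>
        ((\<lambda>y. \<psi>x t y r) has_derivative (\<lambda>h. \<psi>xx t x r *v h)) (at x)) \<and>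
     (\<forall>t\<in>{0<..<T}. \<forall>x\<in>\<Omega>.
        ((\<lambda>s. \<phi> s x) has_real_derivative \<phi>t t x) (at t) \<and>
        ((\<lambda>y. \<phi> t y) has_derivative (\<lambda>h. \<phi>x t x \<bullet> h)) (at x) \<and>
        ((\<lambda>y. \<phi>x t y) has_derivative (\<lambda>h. \<phi>xx t x *v h)) (at x)) \<and>
     \<comment> \<open>polynomial decay in r of all orders\<close>
     (\<forall>m::real. m \<ge> 0 \<longrightarrow> (\<exists>C. \<forall>t\<in>{0..T}. \<forall>x\<in>closure \<Omega>. \<forall>r\<in>{r0..}.
        (1 + r) powr m * (\<bar>\<psi> t x r\<bar> + \<bar>\<psi>t t x r\<bar> + \<bar>\<psi>r t x r\<bar> + norm (\<psi>x t x r)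
                          + norm (\<psi>xx t x r)) \<le> C)) \<and>
     \<comment> \<open>homogeneous Neumann boundary conditions\<close>
     (\<forall>t\<in>{0..T}. \<forall>x\<in>frontier \<Omega>. \<forall>r\<in>{r0..}. \<psi>x t x r \<bullet> nrm x = 0) \<and>
     (\<forall>t\<in>{0..T}. \<forall>x\<in>frontier \<Omega>. \<phi>x t x \<bullet> nrm x = 0) \<and>
     \<comment> \<open>initial data\<close>
     (\<forall>x\<in>closure \<Omega>. \<forall>r\<in>{r0..}. \<psi> 0 x r = \<psi>0 x r) \<and>
     (\<forall>x\<in>closure \<Omega>. \<phi> 0 x = \<phi>0 x) \<and>
     \<comment> \<open>the polymer equation\<close>
     (\<forall>t\<in>{0<..<T}. \<forall>x\<in>\<Omega>. \<forall>r\<in>{r0<..}.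
        \<psi>t t x r + v t x \<bullet> \<psi>x t x r + \<tau> r * \<phi> t x * \<psi>r t x r
          - A r * (\<Sum>i\<in>UNIV. \<psi>xx t x r $ i $ i)
        = - \<beta> r (v t x) (symgrad v t x) * \<psi> t x r
          + 2 * (LINT rt:{r..}|lborel. \<beta> rt (v t x) (symgrad v t x) * \<kappa> r rt * \<psi> t x rt)) \<and>
     \<comment> \<open>the monomer equation; d/dr (r tau(r)) = tau(r) + r tau'(r)\<close>
     (\<forall>t\<in>{0<..<T}. \<forall>x\<in>\<Omega>.
        \<phi>t t x + v t x \<bullet> \<phi>x t x - A0 * (\<Sum>i\<in>UNIV. \<phi>xx t x $ i $ i)
        = - \<phi> t x * (LINT r:{r0..}|lborel. (\<tau> r + r * deriv \<tau> r) * \<psi> t x r)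
          + 2 * (LINT r:{0..r0}|lborel. r *
                   (LINT rt:{r0..}|lborel. \<beta> rt (v t x) (symgrad v t x) * \<kappa> r rt * \<psi> t x rt))))"

end

theory Submission
  imports Defs
begin

definition diff_quot :: "(real \<Rightarrow> real) \<Rightarrow> real \<Rightarrow> real \<Rightarrow> real" where
  "diff_quot g r h = (g (r + h) - g r) / h"

lemma DERIV_iff_diff_quot_tendsto: "DERIV g r :> D \<longleftrightarrow> (diff_quot g r \<longlongrightarrow> D) (at 0)"
  by (simp add: DERIV_def diff_quot_def[abs_def])

lemma isCont_diff_quot:
  assumes "continuous_on UNIV g" "h \<noteq> 0"
  shows "isCont (diff_quot g r) h"
proof -
  have "isCont g (r + h)" using assms(1) by (simp add: continuous_on_eq_continuous_at)
  then have "isCont (\<lambda>h. g (r + h)) h" by (rule isCont_o2[rotated]) (intro continuous_intros)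
  then show ?thesis unfolding diff_quot_def using assms(2) by (intro continuous_intros) auto
qed

lemma Cauchy_imp_tendsto_at:
  fixes f :: "real \<Rightarrow> real"
  assumes "\<And>e. e > 0 \<Longrightarrow> \<exists>d>0. \<forall>x y. x \<noteq> a \<longrightarrow> y \<noteq> a \<longrightarrow> \<bar>x - a\<bar> < d \<longrightarrow> \<bar>y - a\<bar> < d
             \<longrightarrow> \<bar>f x - f y\<bar> < e"
  shows "\<exists>l. (f \<longlongrightarrow> l) (at a)"
proof -
  have nonbot: "filtermap f (at a) \<noteq> bot" by (simp add: filtermap_bot_iff)
  have "cauchy_filter (filtermap f (at a))"
    unfolding cauchy_filter_metric_filtermap
  proof (intro allI impI)
    fix e :: real assume "e > 0"
    then obtain d where "d > 0" and d: "\<forall>x y. x \<noteq> a \<longrightarrow> y \<noteq> a \<longrightarrow> \<bar>x - a\<bar> < d \<longrightarrow> \<bar>y - a\<bar> < d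
             \<longrightarrow> \<bar>f x - f y\<bar> < e"
      using assms by blast
    have "eventually (\<lambda>x. x \<noteq> a \<and> \<bar>x - a\<bar> < d) (at a)"
      using \<open>d > 0\<close> by (auto simp: eventually_at dist_real_def)
    then show "\<exists>P. eventually P (at a) \<and> (\<forall>x y. P x \<and> P y \<longrightarrow> dist (f x) (f y) < e)"
      using d by (auto simp: dist_real_def)
  qed
  then obtain l where "filtermap f (at a) \<le> nhds l"
    using cauchy_filter_complete_converges[OF _ complete_UNIV _ nonbot] by auto
  then show ?thesis unfolding filterlim_def by blast
qed

lemma le_by_rational_approximation:
  fixes f :: "real \<Rightarrow> real"
  assumes "isCont f x" "open U" "x \<in> U" "\<And>q. q \<in> \<rat> \<Longrightarrow> q \<in> U \<Longrightarrow> f q \<le> c"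
  shows "f x \<le> c"
proof -
  have "x \<in> closure (U \<inter> \<rat>)"
    using open_Int_closure_subset[OF assms(2), of \<rat>] assms(3) by (auto simp: Rats_closure_real)
  then obtain s where s: "\<And>n. s n \<in> U \<inter> \<rat>" "s \<longlonglongrightarrow> x"
    unfolding closure_sequential by blast
  have "(\<lambda>n. f (s n)) \<longlonglongrightarrow> f x" using isCont_tendsto_compose[OF assms(1) s(2)] .
  then show ?thesis using s(1) assms(4) by (intro LIMSEQ_le_const2) auto
qed

text \<open>A Cauchy criterion for the difference quotients at \<open>0\<close> that quantifies over countable
  sets only, so that the set of points where it holds is Borel.\<close>
definition diff_quot_rat_Cauchy :: "(real \<Rightarrow> real) \<Rightarrow> real \<Rightarrow> bool" where
  "diff_quot_rat_Cauchy g r \<longleftrightarrow>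
     (\<forall>k::nat. \<exists>m::nat. \<forall>a b::rat. a \<noteq> 0 \<longrightarrow> b \<noteq> 0 \<longrightarrow>
        \<bar>of_rat a\<bar> < 1 / Suc m \<longrightarrow> \<bar>of_rat b\<bar> < 1 / Suc m \<longrightarrow>
        \<bar>diff_quot g r (of_rat a) - diff_quot g r (of_rat b)\<bar> \<le> 1 / Suc k)"

lemma pred_diff_quot_rat_Cauchy[measurable]:
  assumes [measurable]: "g \<in> borel_measurable borel"
  shows "Measurable.pred borel (diff_quot_rat_Cauchy g)"
  unfolding diff_quot_rat_Cauchy_def[abs_def] diff_quot_def by measurable

lemma diff_quot_rat_Cauchy_if_differentiable:
  assumes "g differentiable (at r)"
  shows "diff_quot_rat_Cauchy g r"
  unfolding diff_quot_rat_Cauchy_def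
proof
  fix k :: nat
  obtain D where "(diff_quot g r \<longlongrightarrow> D) (at 0)"
    using assms by (auto simp: real_differentiable_def DERIV_iff_diff_quot_tendsto)
  define \<epsilon> where "\<epsilon> = 1 / (2 * real (Suc k))"
  have "\<epsilon> > 0" "\<epsilon> + \<epsilon> = 1 / Suc k" by (simp_all add: \<epsilon>_def field_simps)
  then obtain d where "d > 0" and d: "\<And>h. h \<noteq> 0 \<Longrightarrow> \<bar>h\<bar> < d \<Longrightarrow> \<bar>diff_quot g r h - D\<bar> < \<epsilon>"
    using LIM_D[OF \<open>(diff_quot g r \<longlongrightarrow> D) (at 0)\<close>] by (metis diff_zero real_norm_def)
  obtain m where "inverse (Suc m) < d" using reals_Archimedean[OF \<open>d > 0\<close>] by blast
  have "\<bar>diff_quot g r (of_rat a) - diff_quot g r (of_rat b)\<bar> \<le> 1 / Suc k"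
    if "a \<noteq> 0" "b \<noteq> 0" "\<bar>of_rat a\<bar> < 1 / Suc m" "\<bar>of_rat b\<bar> < 1 / Suc m" for a b :: rat
  proof -
    have "\<bar>diff_quot g r (of_rat a) - D\<bar> < \<epsilon>" "\<bar>diff_quot g r (of_rat b) - D\<bar> < \<epsilon>"
      using that d \<open>inverse (Suc m) < d\<close> by (auto simp: inverse_eq_divide)
    then show ?thesis using \<open>\<epsilon> + \<epsilon> = 1 / Suc k\<close> by linarith
  qed
  then show "\<exists>m::nat. \<forall>a b::rat. a \<noteq> 0 \<longrightarrow> b \<noteq> 0 \<longrightarrow>
      \<bar>of_rat a\<bar> < 1 / Suc m \<longrightarrow> \<bar>of_rat b\<bar> < 1 / Suc m \<longrightarrow>
      \<bar>diff_quot g r (of_rat a) - diff_quot g r (of_rat b)\<bar> \<le> 1 / Suc k"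
    by blast
qed

lemma diff_quot_bound_from_rationals:
  fixes g :: "real \<Rightarrow> real"
  assumes cont: "continuous_on UNIV g"
    and rat: "\<forall>a b::rat. a \<noteq> 0 \<longrightarrow> b \<noteq> 0 \<longrightarrow> \<bar>of_rat a\<bar> < \<delta> \<longrightarrow> \<bar>of_rat b\<bar> < \<delta> \<longrightarrow>
                \<bar>diff_quot g r (of_rat a) - diff_quot g r (of_rat b)\<bar> \<le> c"
    and xy: "x \<noteq> 0" "y \<noteq> 0" "\<bar>x\<bar> < \<delta>" "\<bar>y\<bar> < \<delta>"
  shows "\<bar>diff_quot g r x - diff_quot g r y\<bar> \<le> c"
proof -
  define U where "U = {h::real. h \<noteq> 0 \<and> \<bar>h\<bar> < \<delta>}"
  have U: "open U"
    unfolding U_def by (intro open_Collect_conj open_Collect_neq open_Collect_less) (auto intro: continuous_intros)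
  have isCont: "isCont (diff_quot g r) x" if "x \<in> U" for x
    using isCont_diff_quot[OF cont] that by (simp add: U_def)
  have rat_rat: "\<bar>diff_quot g r a - diff_quot g r b\<bar> \<le> c"
    if "a \<in> \<rat>" "b \<in> \<rat>" and ab: "a \<in> U" "b \<in> U" for a b
  proof -
    obtain p q where "a = of_rat p" "b = of_rat q" using \<open>a \<in> \<rat>\<close> \<open>b \<in> \<rat>\<close> Rats_cases by metis
    then show ?thesis using rat[rule_format, of p q] ab by (simp add: U_def)
  qed
  have real_rat: "\<bar>diff_quot g r x - diff_quot g r b\<bar> \<le> c" if "x \<in> U" "b \<in> \<rat>" "b \<in> U" for x b
    by (rule le_by_rational_approximation[OF _ U that(1)])
      (use rat_rat that isCont[OF that(1)] in \<open>auto intro: continuous_intros\<close>)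
  have xU: "x \<in> U" and yU: "y \<in> U" using xy by (auto simp: U_def)
  show ?thesis
    by (rule le_by_rational_approximation[OF _ U yU])
      (use real_rat[OF xU] isCont[OF yU] in \<open>auto intro: continuous_intros\<close>)
qed

lemma differentiable_if_diff_quot_rat_Cauchy:
  fixes g :: "real \<Rightarrow> real"
  assumes "continuous_on UNIV g" "diff_quot_rat_Cauchy g r"
  shows "g differentiable (at r)"
proof -
  have "\<exists>d>0. \<forall>x y. x \<noteq> 0 \<longrightarrow> y \<noteq> 0 \<longrightarrow> \<bar>x - 0\<bar> < d \<longrightarrow> \<bar>y - 0\<bar> < d
          \<longrightarrow> \<bar>diff_quot g r x - diff_quot g r y\<bar> < e" if "e > 0" for e
  proof -
    obtain k where k: "inverse (Suc k) < e" using reals_Archimedean[OF \<open>e > 0\<close>] by blast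
    then obtain m where "\<forall>a b::rat. a \<noteq> 0 \<longrightarrow> b \<noteq> 0 \<longrightarrow>
        \<bar>of_rat a\<bar> < 1 / Suc m \<longrightarrow> \<bar>of_rat b\<bar> < 1 / Suc m \<longrightarrow>
        \<bar>diff_quot g r (of_rat a) - diff_quot g r (of_rat b)\<bar> \<le> 1 / Suc k"
      using assms(2) unfolding diff_quot_rat_Cauchy_def by blast
    from diff_quot_bound_from_rationals[OF assms(1) this]
    show ?thesis using k by (intro exI[of _ "1 / Suc m"]) (force simp: inverse_eq_divide)
  qed
  then obtain D where "(diff_quot g r \<longlongrightarrow> D) (at 0)" using Cauchy_imp_tendsto_at by blast
  then show ?thesis by (auto simp: real_differentiable_def DERIV_iff_diff_quot_tendsto)
qed

lemma borel_measurable_deriv: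
  fixes g :: "real \<Rightarrow> real"
  assumes cont: "continuous_on UNIV g"
  shows "deriv g \<in> borel_measurable borel"
proof -
  have deriv_eq: "deriv g r = (if g differentiable (at r) then lim (\<lambda>n. diff_quot g r (1 / Suc n))
                               else (SOME D. False))" for r
  proof (cases "g differentiable (at r)")
    case True
    then have "(diff_quot g r \<longlongrightarrow> deriv g r) (at 0)"
      using DERIV_deriv_iff_real_differentiable DERIV_iff_diff_quot_tendsto by blast
    moreover have "filterlim (\<lambda>n. 1 / real (Suc n)) (at 0) sequentially"
      unfolding filterlim_at using LIMSEQ_Suc[OF lim_inverse_n'] by (auto simp: inverse_eq_divide)
    ultimately have "(\<lambda>n. diff_quot g r (1 / Suc n)) \<longlonglongrightarrow> deriv g r"
      by (rule filterlim_compose)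
    then show ?thesis using True by (simp add: limI)
  next
    case False
    then show ?thesis by (simp add: deriv_def real_differentiable_def)
  qed
  have [measurable]: "g \<in> borel_measurable borel"
    using cont by (rule borel_measurable_continuous_onI)
  have "g differentiable (at r) \<longleftrightarrow> diff_quot_rat_Cauchy g r" for r
    using diff_quot_rat_Cauchy_if_differentiable differentiable_if_diff_quot_rat_Cauchy[OF cont] by blast
  then have [measurable]: "Measurable.pred borel (\<lambda>r. g differentiable (at r))" by simp
  show ?thesis
    unfolding deriv_eq[abs_def] diff_quot_def by measurable
qed

lemma set_integrable_inverse_square:
  fixes r0 :: real
  assumes "r0 > 0"
  shows "set_integrable lborel {r0..} (\<lambda>x. 1 / x\<^sup>2)"
proof -
  have "(\<lambda>x. 1 / x ^ 2) integrable_on {r0..}"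
    using has_integral_inverse_power_to_inf[of 2 r0] assms unfolding integrable_on_def by auto
  then have "(\<lambda>x::real. 1 / x\<^sup>2) absolutely_integrable_on {r0..}"
    by (rule nonnegative_absolutely_integrable_1) simp
  then show ?thesis
    unfolding set_integrable_def by (simp add: integrable_completion)
qed

lemma set_integrable_of_square_decay:
  fixes p :: "real \<Rightarrow> real"
  assumes "r0 > 0" "continuous_on {r0..} p" "\<And>r. r \<ge> r0 \<Longrightarrow> r\<^sup>2 * \<bar>p r\<bar> \<le> C"
  shows "set_integrable lborel {r0..} p"
proof -
  have "C \<ge> 0"
    using assms(3)[of r0] by (meson order.trans mult_nonneg_nonneg abs_ge_zero zero_le_power2 order_refl)
  have "\<bar>p r\<bar> \<le> C * (1 / r\<^sup>2)" if "r \<ge> r0" for r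
    using assms(1) assms(3)[OF that] that by (simp add: field_simps)
  then have bound: "AE x in lborel. norm (indicator {r0..} x *\<^sub>R p x) \<le> norm (indicator {r0..} x *\<^sub>R (C * (1 / x\<^sup>2)))"
    using \<open>C \<ge> 0\<close> by (intro AE_I2) (auto simp: indicator_def)
  have dominant: "set_integrable lborel {r0..} (\<lambda>x. C * (1 / x\<^sup>2))"
    using set_integrable_mult_right[OF set_integrable_inverse_square[OF assms(1)]] .
  have "(\<lambda>x. indicator {r0..} x *\<^sub>R p x) \<in> borel_measurable lborel"
    using borel_measurable_continuous_on_indicator[OF _ assms(2)] by simp
  from Bochner_Integration.integrable_bound[OF dominant[unfolded set_integrable_def] this bound]
  show ?thesis unfolding set_integrable_def .
qed

lemma borel_measurable_indicator_deriv:
  fixes f :: "real \<Rightarrow> real"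
  assumes "continuous_on {a..} f"
  shows "(\<lambda>r. indicator {a..} r * deriv f r) \<in> borel_measurable borel"
proof -
  define f1 where "f1 r = f (max a r)" for r
  have "continuous_on UNIV f1"
    unfolding f1_def by (rule continuous_on_compose2[OF assms]) (auto intro: continuous_intros)
  then have [measurable]: "deriv f1 \<in> borel_measurable borel" by (rule borel_measurable_deriv)
  have "deriv f r = deriv f1 r" if "r > a" for r
  proof (rule deriv_cong_ev)
    have "eventually (\<lambda>x. x \<in> {a<..}) (nhds r)" using that by (intro eventually_nhds_in_open) auto
    then show "eventually (\<lambda>x. f x = f1 x) (nhds r)" by eventually_elim (auto simp: f1_def)
  qed simp
  then have "indicator {a..} r * deriv f r = (if r = a then deriv f a else indicator {a<..} r * deriv f1 r)" for r
    by (auto simp: indicator_def)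
  then show ?thesis by (subst ext) (assumption, measurable)
qed

lemma DERIV_nonneg_if_mono_on:
  fixes f :: "real \<Rightarrow> real"
  assumes "mono_on S f" "open S" "r \<in> S" "DERIV f r :> D"
  shows "D \<ge> 0"
proof (rule ccontr)
  assume "\<not> D \<ge> 0"
  then obtain d where "d > 0" and dec: "\<And>h. h > 0 \<Longrightarrow> h < d \<Longrightarrow> f r > f (r + h)"
    using DERIV_neg_dec_right[OF assms(4)] by force
  obtain e where "e > 0" "ball r e \<subseteq> S" using assms(2,3) open_contains_ball by blast
  define h where "h = min d e / 2"
  have "h > 0" "h < d" "r + h \<in> S"
    using \<open>d > 0\<close> \<open>e > 0\<close> \<open>ball r e \<subseteq> S\<close> by (auto simp: h_def dist_real_def)
  then show False using dec[of h] mono_onD[OF assms(1) assms(3)] by force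
qed

lemma integral_le_of_nonneg_integrable_bound:
  fixes f g :: "'a \<Rightarrow> real"
  assumes "integrable M g" "\<And>x. f x \<le> g x" "\<And>x. 0 \<le> g x"
  shows "integral\<^sup>L M f \<le> integral\<^sup>L M g"
proof (cases "integrable M f")
  case True
  then show ?thesis using assms by (intro integral_mono) auto
next
  case False
  then show ?thesis using assms by (simp add: not_integrable_integral_eq)
qed

lemma growth_rate_bounds:
  fixes \<tau> :: "real \<Rightarrow> real"
  assumes r0: "r0 > 0" and \<tau>_mono: "mono_on {r0..} \<tau>" and \<tau>_nonneg: "\<forall>r\<ge>r0. \<tau> r \<ge> 0"
    and \<tau>_ineq: "AE r in lborel. r > r0 \<longrightarrow> \<tau> differentiable (at r) \<and>
                  r0 / K \<le> \<tau> r + r * deriv \<tau> r \<and> \<tau> r + deriv \<tau> r + r * deriv \<tau> r + \<tau> r / r \<le> K"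
  shows "AE r in lborel. r \<ge> r0 \<longrightarrow> r0 / K \<le> \<tau> r + r * deriv \<tau> r \<and> \<tau> r + r * deriv \<tau> r \<le> K"
  using \<tau>_ineq AE_lborel_singleton[of r0]
proof eventually_elim
  case (elim r)
  show ?case
  proof
    assume "r \<ge> r0"
    with elim have "r > r0" by simp
    with elim obtain D where D: "DERIV \<tau> r :> D" and lower: "r0 / K \<le> \<tau> r + r * deriv \<tau> r"
      and upper: "\<tau> r + deriv \<tau> r + r * deriv \<tau> r + \<tau> r / r \<le> K"
      by (auto simp: real_differentiable_def)
    have "mono_on {r0<..} \<tau>" using \<tau>_mono by (rule mono_on_subset) auto
    then have "D \<ge> 0" using DERIV_nonneg_if_mono_on[OF _ open_greaterThan _ D] \<open>r > r0\<close> by simp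
    then have "deriv \<tau> r \<ge> 0" using DERIV_imp_deriv[OF D] by simp
    moreover have "\<tau> r / r \<ge> 0" using \<tau>_nonneg \<open>r > r0\<close> r0 by simp
    ultimately show "r0 / K \<le> \<tau> r + r * deriv \<tau> r \<and> \<tau> r + r * deriv \<tau> r \<le> K"
      using lower upper by simp
  qed
qed

lemma growth_integral_lower_bound:
  fixes g p :: "real \<Rightarrow> real"
  assumes r0: "r0 > 0" and K: "K > 0"
    and g_bounds: "AE r in lborel. r \<ge> r0 \<longrightarrow> r0 / K \<le> g r \<and> g r \<le> K"
    and g_meas: "(\<lambda>r. indicator {r0..} r * g r) \<in> borel_measurable borel"
    and p_cont: "continuous_on {r0..} p" and p_nonneg: "\<And>r. r \<ge> r0 \<Longrightarrow> p r \<ge> 0"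
    and p_int: "set_integrable lborel {r0..} p"
  shows "r0 / K * (LINT r:{r0..}|lborel. p r) \<le> (LINT r:{r0..}|lborel. g r * p r)"
proof -
  have gp_bounds: "AE r in lborel. r \<ge> r0 \<longrightarrow> r0 / K * p r \<le> g r * p r \<and> g r * p r \<le> K * p r"
    using g_bounds
  proof eventually_elim
    case (elim r)
    show ?case
    proof
      assume "r \<ge> r0"
      with elim have "r0 / K \<le> g r" "g r \<le> K" by auto
      then show "r0 / K * p r \<le> g r * p r \<and> g r * p r \<le> K * p r"
        using mult_right_mono p_nonneg[OF \<open>r \<ge> r0\<close>] by blast

    qed
  qed
  have "(\<lambda>r. indicator {r0..} r *\<^sub>R (g r * p r)) = (\<lambda>r. (indicator {r0..} r * g r) * (indicator {r0..} r * p r))"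
    by (auto simp: indicator_def fun_eq_iff)
  also have "\<dots> \<in> borel_measurable lborel"
    using g_meas borel_measurable_continuous_on_indicator[OF _ p_cont] by simp
  finally have gp_meas: "(\<lambda>r. indicator {r0..} r *\<^sub>R (g r * p r)) \<in> borel_measurable lborel" .
  have "AE r in lborel. norm (indicator {r0..} r *\<^sub>R (g r * p r)) \<le> norm (indicator {r0..} r *\<^sub>R (K * p r))"
    using gp_bounds
  proof eventually_elim
    case (elim r)
    show ?case
    proof (cases "r \<ge> r0")
      case True
      have "0 \<le> r0 / K * p r" using r0 K p_nonneg[OF True] by simp
      then show ?thesis using elim True by (simp add: indicator_def abs_le_iff)
    qed (simp add: indicator_def)
  qed
  then have gp_int: "set_integrable lborel {r0..} (\<lambda>r. g r * p r)"
    using Bochner_Integration.integrable_bound[OF set_integrable_mult_right[OF p_int, of K, unfolded set_integrable_def] gp_meas]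
    unfolding set_integrable_def by blast
  have "(LINT r:{r0..}|lborel. r0 / K * p r) \<le> (LINT r:{r0..}|lborel. g r * p r)"
    using gp_bounds by (intro set_integral_mono_AE[OF set_integrable_mult_right[OF p_int] gp_int]) auto
  then show ?thesis by (simp add: set_integral_mult_right)
qed

lemma fragmentation_integral_upper_bound:
  fixes b p :: "real \<Rightarrow> real" and \<kappa> :: "real \<Rightarrow> real \<Rightarrow> real"
  assumes r0: "r0 > 0"
    and \<kappa>: "\<forall>r rt. \<kappa> r rt = (if rt > r0 \<and> 0 < r \<and> r < rt then 1 / rt else 0)"
    and b_nonneg: "\<And>rt. rt > r0 \<Longrightarrow> 0 \<le> b rt" and b_le: "\<And>rt. rt > r0 \<Longrightarrow> b rt \<le> K"
    and p_nonneg: "\<And>r. r \<ge> r0 \<Longrightarrow> p r \<ge> 0" and p_int: "set_integrable lborel {r0..} p"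
  shows "(LINT r:{0..r0}|lborel. r * (LINT rt:{r0..}|lborel. b rt * \<kappa> r rt * p rt))
           \<le> K * r0 / 2 * (LINT r:{r0..}|lborel. p r)"
proof -
  define c where "c = K / r0 * (LINT r:{r0..}|lborel. p r)"
  have "K \<ge> 0" using b_nonneg[of "r0 + 1"] b_le[of "r0 + 1"] by simp
  have "(LINT r:{r0..}|lborel. p r) \<ge> 0"
    unfolding set_lebesgue_integral_def
    by (intro integral_nonneg_AE) (auto simp: indicator_def p_nonneg)
  then have "c \<ge> 0" using \<open>K \<ge> 0\<close> r0 by (simp add: c_def)
  have inner: "(LINT rt:{r0..}|lborel. b rt * \<kappa> r rt * p rt) \<le> c" for r
  proof -
    have "b rt * \<kappa> r rt * p rt \<le> K / r0 * p rt" if "rt \<ge> r0" for rt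
    proof (cases "rt > r0 \<and> 0 < r \<and> r < rt")
      case True
      then have "b rt * (1 / rt) \<le> K * (1 / r0)"
        using b_nonneg[of rt] b_le[of rt] r0 by (intro mult_mono) (auto simp: frac_le)
      then have "b rt * (1 / rt) * p rt \<le> K * (1 / r0) * p rt"
        by (rule mult_right_mono[OF _ p_nonneg[OF that]])
      then show ?thesis using True \<kappa> by simp
    next
      case False
      then have "\<kappa> r rt = 0" using \<kappa> by auto
      then show ?thesis using p_nonneg[OF that] \<open>K \<ge> 0\<close> r0 by simp
    qed
    then have "(LINT rt:{r0..}|lborel. b rt * \<kappa> r rt * p rt) \<le> (LINT rt:{r0..}|lborel. K / r0 * p rt)"
      unfolding set_lebesgue_integral_def
      using set_integrable_mult_right[OF p_int, of "K / r0", unfolded set_integrable_def]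
        p_nonneg \<open>K \<ge> 0\<close> r0
      by (intro integral_le_of_nonneg_integrable_bound) (auto simp: indicator_def)
    then show ?thesis by (simp add: c_def set_integral_mult_right)
  qed
  have "indicator {0..r0} r *\<^sub>R (r * (LINT rt:{r0..}|lborel. b rt * \<kappa> r rt * p rt))
          \<le> c * (r ^ 1 * indicator {0..r0} r)" for r
    using mult_left_mono[OF inner, of r] by (auto simp: indicator_def mult.commute)
  then have "(LINT r:{0..r0}|lborel. r * (LINT rt:{r0..}|lborel. b rt * \<kappa> r rt * p rt))
        \<le> (\<integral>r. c * (r ^ 1 * indicator {0..r0} r) \<partial>lborel)"
    unfolding set_lebesgue_integral_def[where A="{0..r0}"]
    using \<open>c \<ge> 0\<close>
    by (intro integral_le_of_nonneg_integrable_bound integrable_mult_right borel_integrable_atLeastAtMost)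
      (auto simp: indicator_def intro: continuous_intros)
  also have "\<dots> = c * (r0\<^sup>2 / 2)"
    using integral_power[of 0 r0 1] r0 by (simp add: power2_eq_square)
  finally show ?thesis using r0 by (simp add: c_def power2_eq_square field_simps)
qed

lemma monomer_source_nonpos:
  fixes \<tau> b p :: "real \<Rightarrow> real" and \<kappa> :: "real \<Rightarrow> real \<Rightarrow> real"
  assumes r0: "r0 > 0" and K: "K > 0"
    and \<tau>_cont: "continuous_on {r0..} \<tau>" and \<tau>_mono: "mono_on {r0..} \<tau>"
    and \<tau>_nonneg: "\<forall>r\<ge>r0. \<tau> r \<ge> 0"
    and \<tau>_ineq: "AE r in lborel. r > r0 \<longrightarrow> \<tau> differentiable (at r) \<and>
                  r0 / K \<le> \<tau> r + r * deriv \<tau> r \<and> \<tau> r + deriv \<tau> r + r * deriv \<tau> r + \<tau> r / r \<le> K"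
    and \<kappa>: "\<forall>r rt. \<kappa> r rt = (if rt > r0 \<and> 0 < r \<and> r < rt then 1 / rt else 0)"
    and b_nonneg: "\<And>rt. rt > r0 \<Longrightarrow> 0 \<le> b rt" and b_le: "\<And>rt. rt > r0 \<Longrightarrow> b rt \<le> K"
    and p_cont: "continuous_on {r0..} p" and p_nonneg: "\<And>r. r \<ge> r0 \<Longrightarrow> p r \<ge> 0"
    and p_decay: "\<And>r. r \<ge> r0 \<Longrightarrow> r\<^sup>2 * \<bar>p r\<bar> \<le> C"
    and large: "\<phi> \<ge> K\<^sup>2"
  shows "- \<phi> * (LINT r:{r0..}|lborel. (\<tau> r + r * deriv \<tau> r) * p r)
           + 2 * (LINT r:{0..r0}|lborel. r * (LINT rt:{r0..}|lborel. b rt * \<kappa> r rt * p rt)) \<le> 0"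
proof -
  define J where "J = (LINT r:{r0..}|lborel. p r)"
  have p_int: "set_integrable lborel {r0..} p"
    using set_integrable_of_square_decay[OF r0 p_cont p_decay] .
  have "J \<ge> 0"
    unfolding J_def set_lebesgue_integral_def
    by (intro integral_nonneg_AE) (auto simp: indicator_def p_nonneg)
  have "\<phi> \<ge> 0" using large by (meson order.trans zero_le_power2)
  have "(\<lambda>r. indicator {r0..} r * (\<tau> r + r * deriv \<tau> r))
          = (\<lambda>r. indicator {r0..} r * \<tau> r + r * (indicator {r0..} r * deriv \<tau> r))"
    by (auto simp: fun_eq_iff algebra_simps)
  also have "\<dots> \<in> borel_measurable borel"
    using borel_measurable_continuous_on_indicator[OF _ \<tau>_cont] borel_measurable_indicator_deriv[OF \<tau>_cont]
    by simp
  finally have "r0 / K * J \<le> (LINT r:{r0..}|lborel. (\<tau> r + r * deriv \<tau> r) * p r)"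
    unfolding J_def
    by (intro growth_integral_lower_bound[OF r0 K growth_rate_bounds[OF r0 \<tau>_mono \<tau>_nonneg \<tau>_ineq] _
          p_cont p_nonneg p_int])
  from mult_left_mono[OF this \<open>\<phi> \<ge> 0\<close>]
  have "- \<phi> * (LINT r:{r0..}|lborel. (\<tau> r + r * deriv \<tau> r) * p r) \<le> - \<phi> * (r0 / K * J)"
    by simp
  moreover have "2 * (LINT r:{0..r0}|lborel. r * (LINT rt:{r0..}|lborel. b rt * \<kappa> r rt * p rt))
                   \<le> K * r0 * J"
    using fragmentation_integral_upper_bound[where b = b and K = K, OF r0 \<kappa> b_nonneg b_le p_nonneg p_int] unfolding J_def
    by simp
  moreover have "- \<phi> * (r0 / K * J) + K * r0 * J = r0 * J * (K\<^sup>2 - \<phi>) / K"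
    using K by (simp add: field_simps power2_eq_square)
  moreover have "r0 * J * (K\<^sup>2 - \<phi>) / K \<le> 0"
    using r0 K \<open>J \<ge> 0\<close> large by (intro divide_nonpos_pos mult_nonneg_nonpos) auto
  ultimately show ?thesis by linarith
qed

definition enters_along :: "'a::real_normed_vector set \<Rightarrow> 'a \<Rightarrow> 'a \<Rightarrow> bool" where
  "enters_along S x e \<longleftrightarrow> (\<exists>\<delta>>0. \<forall>s. 0 < s \<longrightarrow> s < \<delta> \<longrightarrow> x + s *\<^sub>R e \<in> S)"

lemma enters_along_open:
  assumes "open S" "x \<in> S"
  shows "enters_along S x e"
proof -
  obtain r where "r > 0" "ball x r \<subseteq> S" using assms open_contains_ball by blast
  have "x + s *\<^sub>R e \<in> S" if "0 < s" "s < r / (norm e + 1)" for s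
  proof -
    have "norm (s *\<^sub>R e) \<le> s * (norm e + 1)" using that by simp
    also have "\<dots> < r" using that(2) by (simp add: pos_less_divide_eq add_nonneg_pos)
    finally show ?thesis using \<open>ball x r \<subseteq> S\<close> by (auto simp: dist_norm)
  qed
  then show ?thesis unfolding enters_along_def
    using \<open>r > 0\<close> by (intro exI[of _ "r / (norm e + 1)"]) (auto simp: add_nonneg_pos)
qed

lemma positive_on_initial_segment:
  fixes G :: "real \<Rightarrow> real"
  assumes "\<delta> > 0" "continuous_on {0..\<delta>} G" "G 0 > 0"
  shows "\<exists>b>0. b < \<delta> \<and> (\<forall>s\<in>{0..b}. G s > 0)"
proof -
  obtain d where "d > 0" and d: "\<And>s. s \<in> {0..\<delta>} \<Longrightarrow> dist s 0 < d \<Longrightarrow> dist (G s) (G 0) < G 0"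
    using assms(1,2,3) unfolding continuous_on_iff by (metis atLeastAtMost_iff order_refl less_imp_le)
  show ?thesis
    using \<open>d > 0\<close> assms(1) d
    by (intro exI[of _ "min d \<delta> / 2"]) (auto simp: dist_real_def abs_less_iff)
qed

lemma right_derivatives_at_maximum:
  fixes g g' g'' :: "real \<Rightarrow> real"
  assumes "\<delta> > 0" and cont: "continuous_on {0..\<delta>} g" "continuous_on {0..\<delta>} g'" "continuous_on {0..\<delta>} g''"
    and g': "\<And>s. 0 < s \<Longrightarrow> s < \<delta> \<Longrightarrow> (g has_real_derivative g' s) (at s)"
    and g'': "\<And>s. 0 < s \<Longrightarrow> s < \<delta> \<Longrightarrow> (g' has_real_derivative g'' s) (at s)"
    and max: "\<And>s. 0 \<le> s \<Longrightarrow> s \<le> \<delta> \<Longrightarrow> g s \<le> g 0"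
  shows "g' 0 \<le> 0" and "g' 0 = 0 \<Longrightarrow> g'' 0 \<le> 0"
proof -
  have no_increase: False if "b > 0" "b < \<delta>" "\<And>s. 0 < s \<Longrightarrow> s < b \<Longrightarrow> g' s > 0" for b
  proof -
    have cg: "continuous_on {0..b} g" using cont(1) by (rule continuous_on_subset) (use that in auto)
    have "g 0 < g b"
    proof (rule DERIV_pos_imp_increasing_open[OF that(1) _ cg])
      fix s assume "0 < s" "s < b"
      then show "\<exists>y. DERIV g s :> y \<and> y > 0" using g' that by (intro exI[of _ "g' s"]) auto
    qed
    then show False using max[of b] that by simp
  qed
  show "g' 0 \<le> 0"
  proof (rule ccontr)
    assume "\<not> g' 0 \<le> 0"
    then obtain b where "b > 0" "b < \<delta>" "\<forall>s\<in>{0..b}. g' s > 0"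
      using positive_on_initial_segment[OF \<open>\<delta> > 0\<close> cont(2)] by auto
    then show False using no_increase[of b] by auto
  qed
  assume "g' 0 = 0"
  show "g'' 0 \<le> 0"
  proof (rule ccontr)
    assume "\<not> g'' 0 \<le> 0"
    then obtain b where "b > 0" "b < \<delta>" and pos: "\<forall>s\<in>{0..b}. g'' s > 0"
      using positive_on_initial_segment[OF \<open>\<delta> > 0\<close> cont(3)] by auto
    have "g' s > 0" if "0 < s" "s < b" for s
    proof -
      have cg': "continuous_on {0..s} g'" using cont(2) by (rule continuous_on_subset) (use that \<open>b < \<delta>\<close> in auto)
      have "g' 0 < g' s"
      proof (rule DERIV_pos_imp_increasing_open[OF that(1) _ cg'])
        fix t assume "0 < t" "t < s"
        then show "\<exists>y. DERIV g' t :> y \<and> y > 0"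
          using g'' pos that \<open>b < \<delta>\<close> by (intro exI[of _ "g'' t"]) auto
      qed
      then show ?thesis using \<open>g' 0 = 0\<close> by simp
    qed
    then show False using no_increase[of b] \<open>b > 0\<close> \<open>b < \<delta>\<close> by blast
  qed
qed

lemma bounded_linear_matrix_vector_mult_left: "bounded_linear (\<lambda>A::real^'n^'m. A *v v)"
  unfolding linear_conv_bounded_linear[symmetric]
  by (rule linearI) (simp_all add: matrix_vector_mult_add_rdistrib scaleR_matrix_vector_assoc)

lemma has_derivative_along_line:
  assumes "(f has_derivative F) (at (x + s *\<^sub>R e))" "linear F"
  shows "((\<lambda>s. f (x + s *\<^sub>R e)) has_derivative (\<lambda>h. h *\<^sub>R F e)) (at s)"
proof -
  have "((\<lambda>s. x + s *\<^sub>R e) has_derivative (\<lambda>h. h *\<^sub>R e)) (at s)"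
    by (auto intro!: derivative_eq_intros)
  from diff_chain_at[OF this assms(1)] show ?thesis
    using assms(2) by (simp add: o_def linear_scale)
qed

lemma directional_derivatives_at_maximum:
  fixes f :: "real^'n \<Rightarrow> real" and fx :: "real^'n \<Rightarrow> real^'n" and fxx :: "real^'n \<Rightarrow> real^'n^'n"
  assumes cont: "continuous_on (closure \<Omega>) f" "continuous_on (closure \<Omega>) fx" "continuous_on (closure \<Omega>) fxx"
    and f': "\<And>y. y \<in> \<Omega> \<Longrightarrow> (f has_derivative (\<lambda>h. fx y \<bullet> h)) (at y)"
    and f'': "\<And>y. y \<in> \<Omega> \<Longrightarrow> (fx has_derivative (\<lambda>h. fxx y *v h)) (at y)"
    and x: "x \<in> closure \<Omega>" and max: "\<And>y. y \<in> closure \<Omega> \<Longrightarrow> f y \<le> f x"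
    and e: "enters_along \<Omega> x e"
  shows "fx x \<bullet> e \<le> 0" and "fx x \<bullet> e = 0 \<Longrightarrow> (fxx x *v e) \<bullet> e \<le> 0"
proof -
  obtain \<delta>0 where "\<delta>0 > 0" and line: "\<And>s. 0 < s \<Longrightarrow> s < \<delta>0 \<Longrightarrow> x + s *\<^sub>R e \<in> \<Omega>"
    using e unfolding enters_along_def by blast
  define \<delta> where "\<delta> = \<delta>0 / 2"
  have "\<delta> > 0" "\<delta> < \<delta>0" using \<open>\<delta>0 > 0\<close> by (auto simp: \<delta>_def)
  have in_closure: "x + s *\<^sub>R e \<in> closure \<Omega>" if "0 \<le> s" "s \<le> \<delta>" for s
    using that x line[of s] \<open>\<delta> < \<delta>0\<close> closure_subset by (cases "s = 0") auto
  then have image: "(\<lambda>s. x + s *\<^sub>R e) ` {0..\<delta>} \<subseteq> closure \<Omega>" by auto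
  have line_cont: "continuous_on {0..\<delta>} (\<lambda>s. x + s *\<^sub>R e)" by (intro continuous_intros)
  have "continuous_on {0..\<delta>} (\<lambda>s. f (x + s *\<^sub>R e))"
    "continuous_on {0..\<delta>} (\<lambda>s. fx (x + s *\<^sub>R e) \<bullet> e)"
    "continuous_on {0..\<delta>} (\<lambda>s. (fxx (x + s *\<^sub>R e) *v e) \<bullet> e)"
    using continuous_on_compose2[OF cont(1) line_cont image] continuous_on_compose2[OF cont(2) line_cont image]
      continuous_on_compose2[OF cont(3) line_cont image]
    by (auto intro!: continuous_intros bounded_linear.continuous_on[OF bounded_linear_matrix_vector_mult_left])
    note cont_line = this
  have "((\<lambda>s. f (x + s *\<^sub>R e)) has_real_derivative fx (x + s *\<^sub>R e) \<bullet> e) (at s)"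
    and "((\<lambda>s. fx (x + s *\<^sub>R e) \<bullet> e) has_real_derivative (fxx (x + s *\<^sub>R e) *v e) \<bullet> e) (at s)"
    if "0 < s" "s < \<delta>" for s
  proof -
    have y: "x + s *\<^sub>R e \<in> \<Omega>" using line that \<open>\<delta> < \<delta>0\<close> by simp
    show "((\<lambda>s. f (x + s *\<^sub>R e)) has_real_derivative fx (x + s *\<^sub>R e) \<bullet> e) (at s)"
      using has_derivative_along_line[OF f'[OF y]]
      by (simp add: has_field_derivative_def mult_commute_abs bounded_linear_inner_right bounded_linear.linear)
    have "((\<lambda>s. fx (x + s *\<^sub>R e)) has_derivative (\<lambda>h. h *\<^sub>R (fxx (x + s *\<^sub>R e) *v e))) (at s)"
      using has_derivative_along_line[OF f''[OF y]] by simp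
    then have "((\<lambda>s. fx (x + s *\<^sub>R e) \<bullet> e) has_derivative (\<lambda>h. h *\<^sub>R (fxx (x + s *\<^sub>R e) *v e) \<bullet> e)) (at s)"
      by (auto intro!: derivative_eq_intros)
    then show "((\<lambda>s. fx (x + s *\<^sub>R e) \<bullet> e) has_real_derivative (fxx (x + s *\<^sub>R e) *v e) \<bullet> e) (at s)"
      by (simp add: has_field_derivative_def mult_commute_abs)
  qed
  note derivs = this
  have "f (x + s *\<^sub>R e) \<le> f (x + 0 *\<^sub>R e)" if "0 \<le> s" "s \<le> \<delta>" for s
    using max[OF in_closure[OF that]] by simp
  from right_derivatives_at_maximum[OF \<open>\<delta> > 0\<close> cont_line derivs this]
  show "fx x \<bullet> e \<le> 0" and "fx x \<bullet> e = 0 \<Longrightarrow> (fxx x *v e) \<bullet> e \<le> 0" by simp_all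
qed

lemma quadratic_form_axis: "((H::real^'n^'n) *v axis i 1) \<bullet> axis i 1 = H $ i $ i"
  by (simp add: matrix_vector_mult_basis inner_axis column_def)

lemma quadratic_form_uminus: "((H::real^'n^'n) *v (- w)) \<bullet> (- w) = (H *v w) \<bullet> w"
  by (simp add: linear_neg[OF matrix_vector_mul_linear])

lemma diag_nonpos_of_quadratic_form_nonpos_on_halfspace:
  fixes H :: "real^'n^'n"
  assumes "n \<noteq> 0" and neg: "\<And>e. e \<bullet> n < 0 \<Longrightarrow> (H *v e) \<bullet> e \<le> 0"
  shows "H $ i $ i \<le> 0"
proof -
  have closed_halfspace: "(H *v w) \<bullet> w \<le> 0" if "w \<bullet> n \<le> 0" for w
  proof -
    have "isCont (\<lambda>\<epsilon>. (H *v (w - \<epsilon> *\<^sub>R n)) \<bullet> (w - \<epsilon> *\<^sub>R n)) 0"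
      by (intro continuous_intros isCont_o2[OF _ matrix_vector_mult_linear_continuous_at])
    then have "((\<lambda>\<epsilon>. (H *v (w - \<epsilon> *\<^sub>R n)) \<bullet> (w - \<epsilon> *\<^sub>R n)) \<longlongrightarrow> (H *v w) \<bullet> w) (at_right 0)"
      unfolding isCont_def by (auto intro: tendsto_within_subset)
    moreover have "eventually (\<lambda>\<epsilon>. (H *v (w - \<epsilon> *\<^sub>R n)) \<bullet> (w - \<epsilon> *\<^sub>R n) \<le> 0) (at_right 0)"
      using eventually_at_right_less[of 0]
    proof eventually_elim
      case (elim \<epsilon>)
      have "0 < \<epsilon> * (n \<bullet> n)" using elim \<open>n \<noteq> 0\<close> by simp
      then have "(w - \<epsilon> *\<^sub>R n) \<bullet> n < 0" using that by (simp add: inner_diff_left)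
      then show ?case by (rule neg)
    qed
    ultimately show ?thesis by (rule tendsto_upperbound) simp
  qed
  show ?thesis
  proof (cases "axis i 1 \<bullet> n \<le> 0")
    case True
    from closed_halfspace[OF True] show ?thesis by (simp add: quadratic_form_axis)
  next
    case False
    then have "(- axis i 1) \<bullet> n \<le> 0" by simp
    from closed_halfspace[OF this] show ?thesis by (simp only: quadratic_form_uminus quadratic_form_axis)
  qed
qed

lemma gradient_and_hessian_at_maximum:
  fixes f :: "real^'n \<Rightarrow> real" and fx :: "real^'n \<Rightarrow> real^'n" and fxx :: "real^'n \<Rightarrow> real^'n^'n"
  assumes "open \<Omega>"
    and cont: "continuous_on (closure \<Omega>) f" "continuous_on (closure \<Omega>) fx" "continuous_on (closure \<Omega>) fxx"
    and f': "\<And>y. y \<in> \<Omega> \<Longrightarrow> (f has_derivative (\<lambda>h. fx y \<bullet> h)) (at y)"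
    and f'': "\<And>y. y \<in> \<Omega> \<Longrightarrow> (fx has_derivative (\<lambda>h. fxx y *v h)) (at y)"
    and x: "x \<in> closure \<Omega>" and max: "\<And>y. y \<in> closure \<Omega> \<Longrightarrow> f y \<le> f x"
    and boundary: "x \<notin> \<Omega> \<Longrightarrow> n \<noteq> 0 \<and> fx x \<bullet> n = 0 \<and> (\<forall>e. e \<bullet> n < 0 \<longrightarrow> enters_along \<Omega> x e)"
  shows "fx x = 0" and "fxx x $ i $ i \<le> 0"
proof -
  have first: "fx x \<bullet> e \<le> 0" if "enters_along \<Omega> x e" for e
    using directional_derivatives_at_maximum(1)[where f = f and fx = fx and fxx = fxx] cont f' f'' x max that
    by blast
  have second: "(fxx x *v e) \<bullet> e \<le> 0" if "enters_along \<Omega> x e" "fx x \<bullet> e = 0" for e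
    using directional_derivatives_at_maximum(2)[where f = f and fx = fx and fxx = fxx] cont f' f'' x max that
    by blast
  have "fx x = 0 \<and> fxx x $ i $ i \<le> 0"
  proof (cases "x \<in> \<Omega>")
    case True
    then have enters: "enters_along \<Omega> x e" for e using enters_along_open[OF \<open>open \<Omega>\<close>] by blast
    have "fx x \<bullet> fx x \<le> 0" using first[OF enters] .
    then have "fx x = 0" by (metis inner_gt_zero_iff not_le)
    then show ?thesis using second[OF enters, of "axis i 1"] by (simp add: quadratic_form_axis)
  next
    case False
    with boundary have "n \<noteq> 0" and normal: "fx x \<bullet> n = 0"
      and enters: "\<And>e. e \<bullet> n < 0 \<Longrightarrow> enters_along \<Omega> x e" by auto
    have "(fx x - n) \<bullet> n < 0" using normal \<open>n \<noteq> 0\<close> by (simp add: inner_diff_left)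
    from first[OF enters[OF this]] have "fx x \<bullet> fx x \<le> 0" using normal by (simp add: inner_diff_right)
    then have "fx x = 0" by (metis inner_gt_zero_iff not_le)
    moreover have "(fxx x *v e) \<bullet> e \<le> 0" if "e \<bullet> n < 0" for e
      using second[OF enters[OF that]] \<open>fx x = 0\<close> by simp
    ultimately show ?thesis using diag_nonpos_of_quadratic_form_nonpos_on_halfspace[OF \<open>n \<noteq> 0\<close>] by blast
  qed
  then show "fx x = 0" and "fxx x $ i $ i \<le> 0" by simp_all
qed

lemma C11_boundary_inward_directions:
  fixes \<Omega> :: "(real^'n) set"
  assumes "C11_boundary_with_normal \<Omega> nrm" and x: "x \<in> closure \<Omega>" "x \<notin> \<Omega>"
  shows "norm (nrm x) = 1" and "e \<bullet> nrm x < 0 \<Longrightarrow> enters_along \<Omega> x e"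
proof -
  have "x \<in> frontier \<Omega>" using x interior_subset by (auto simp: frontier_def)
  then obtain \<delta> \<rho> g L where "\<delta> > 0"
    and \<rho>': "\<forall>y\<in>ball x \<delta>. (\<rho> has_derivative (\<lambda>h. g y \<bullet> h)) (at y)"
    and "\<forall>y\<in>ball x \<delta>. \<forall>z\<in>ball x \<delta>. norm (g y - g z) \<le> L * norm (y - z)"
    and "\<forall>y\<in>ball x \<delta>. g y \<noteq> 0"
    and local: "\<Omega> \<inter> ball x \<delta> = {y \<in> ball x \<delta>. \<rho> y < 0}"
    and nrm: "nrm x = g x /\<^sub>R norm (g x)"
    using assms(1) unfolding C11_boundary_with_normal_def by blast
  then have "g x \<noteq> 0" by simp
  then show "norm (nrm x) = 1" by (simp add: nrm)
  have "\<rho> x \<ge> 0"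
  proof (rule ccontr)
    assume "\<not> \<rho> x \<ge> 0"
    then have "x \<in> {y \<in> ball x \<delta>. \<rho> y < 0}" using \<open>\<delta> > 0\<close> by simp
    then show False using local x(2) by blast
  qed
  moreover have "\<rho> x \<le> 0"
  proof (rule continuous_le_on_closure[where S = "\<Omega> \<inter> ball x (\<delta> / 2)"])
    have "closure (\<Omega> \<inter> ball x (\<delta> / 2)) \<subseteq> cball x (\<delta> / 2)" by (rule closure_minimal) auto
    also have "\<dots> \<subseteq> ball x \<delta>" using \<open>\<delta> > 0\<close> by (auto simp: subset_eq)
    finally have sub: "closure (\<Omega> \<inter> ball x (\<delta> / 2)) \<subseteq> ball x \<delta>" .
    have "continuous_on (ball x \<delta>) \<rho>"
      using \<rho>' by (intro continuous_at_imp_continuous_on) (auto intro: has_derivative_continuous)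
    then show "continuous_on (closure (\<Omega> \<inter> ball x (\<delta> / 2))) \<rho>"
      using sub by (rule continuous_on_subset)
    show "x \<in> closure (\<Omega> \<inter> ball x (\<delta> / 2))"
      using open_Int_closure_subset[of "ball x (\<delta> / 2)" \<Omega>] x \<open>\<delta> > 0\<close> by (auto simp: Int_commute)
    fix y assume "y \<in> \<Omega> \<inter> ball x (\<delta> / 2)"
    moreover have "ball x (\<delta> / 2) \<subseteq> ball x \<delta>" using \<open>\<delta> > 0\<close> by (intro subset_ball) simp
    ultimately have "y \<in> \<Omega> \<inter> ball x \<delta>" by blast
    then show "\<rho> y \<le> 0" using local by auto
  qed
  ultimately have "\<rho> x = 0" by simp
  assume "e \<bullet> nrm x < 0"
  then have "g x \<bullet> e < 0"
    using \<open>g x \<noteq> 0\<close> by (simp add: nrm inner_commute mult_less_0_iff)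
  have "(\<rho> has_derivative (\<lambda>h. g x \<bullet> h)) (at (x + 0 *\<^sub>R e))" using \<rho>' \<open>\<delta> > 0\<close> by simp
  from has_derivative_along_line[OF this bounded_linear.linear[OF bounded_linear_inner_right]]
  have "DERIV (\<lambda>s. \<rho> (x + s *\<^sub>R e)) 0 :> g x \<bullet> e"
    by (simp add: has_field_derivative_def mult_commute_abs)
  then obtain d where "d > 0" and neg: "\<And>s. s > 0 \<Longrightarrow> s < d \<Longrightarrow> \<rho> (x + s *\<^sub>R e) < 0"
    using DERIV_neg_dec_right[OF _ \<open>g x \<bullet> e < 0\<close>] \<open>\<rho> x = 0\<close> by force
  have "enters_along (ball x \<delta>) x e" using enters_along_open[of "ball x \<delta>" x] \<open>\<delta> > 0\<close> by simp
  then obtain d' where "d' > 0" and ball: "\<And>s. s > 0 \<Longrightarrow> s < d' \<Longrightarrow> x + s *\<^sub>R e \<in> ball x \<delta>"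
    unfolding enters_along_def by blast
  show "enters_along \<Omega> x e"
    unfolding enters_along_def using \<open>d > 0\<close> \<open>d' > 0\<close> neg ball local
    by (intro exI[of _ "min d d'"]) auto
qed

lemma continuous_on_slice_snd:
  assumes "continuous_on (A \<times> B) (\<lambda>(t, x). g t x)" "t \<in> A"
  shows "continuous_on B (g t)"
proof -
  have "continuous_on B (\<lambda>x. (\<lambda>(t, x). g t x) (t, x))"
    by (rule continuous_on_compose2[OF assms(1)]) (use assms(2) in \<open>auto intro!: continuous_intros\<close>)
  then show ?thesis by simp
qed

lemma continuous_on_slice_fst:
  assumes "continuous_on (A \<times> B) (\<lambda>(t, x). g t x)" "x \<in> B"
  shows "continuous_on A (\<lambda>t. g t x)"
proof -
  have "continuous_on A (\<lambda>t. (\<lambda>(t, x). g t x) (t, x))"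
    by (rule continuous_on_compose2[OF assms(1)]) (use assms(2) in \<open>auto intro!: continuous_intros\<close>)
  then show ?thesis by simp
qed


lemma emeasure_lborel_ball_nonzero:
  fixes c :: "'a::euclidean_space"
  assumes "r > 0"
  shows "emeasure lborel (ball c r) \<noteq> 0"
  using content_ball_pos[OF assms] emeasure_lborel_ball_finite[of c r]
  by (simp add: emeasure_eq_ennreal_measure)

lemma borel_measurable_restrict_lborel_of_continuous:
  fixes f :: "'a::euclidean_space \<Rightarrow> 'b::topological_space"
  assumes "continuous_on S f"
  shows "f \<in> borel_measurable (restrict_space lborel S)"
proof -
  have "sets (restrict_space lborel S) = sets (restrict_space borel S)"
    by (intro sets_restrict_space_cong) simp
  then have "borel_measurable (restrict_space lborel S) = borel_measurable (restrict_space borel S)"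
    by (rule measurable_cong_sets) simp
  then show ?thesis using borel_measurable_continuous_on_restrict[OF assms] by simp
qed

lemma abs_le_Linf_norm:
  fixes f :: "real^'n \<Rightarrow> real"
  assumes "open \<Omega>" "continuous_on \<Omega> f" "x \<in> \<Omega>"
  shows "ereal \<bar>f x\<bar> \<le> Linf_norm \<Omega> f"
proof (rule ccontr)
  let ?M = "restrict_space lborel \<Omega>"
  assume "\<not> ?thesis"
  then have "Linf_norm \<Omega> f < ereal \<bar>f x\<bar>" by simp
  then obtain c where c: "Linf_norm \<Omega> f < ereal c" "ereal c < ereal \<bar>f x\<bar>"
    using ereal_dense2 by blast
  have "continuous_on \<Omega> (\<lambda>y. \<bar>f y\<bar>)" using assms(2) by (intro continuous_intros)
  then have "open ((\<lambda>y. \<bar>f y\<bar>) -` {c<..} \<inter> \<Omega>)"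
    using continuous_on_open_vimage[OF assms(1)] open_greaterThan by metis
  then have "open (\<Omega> \<inter> (\<lambda>y. \<bar>f y\<bar>) -` {c<..})" by (simp add: Int_commute)
  moreover have "x \<in> \<Omega> \<inter> (\<lambda>y. \<bar>f y\<bar>) -` {c<..}" using assms(3) c(2) by simp
  ultimately obtain r where "r > 0" and ball: "ball x r \<subseteq> \<Omega> \<inter> (\<lambda>y. \<bar>f y\<bar>) -` {c<..}"
    using open_contains_ball by blast
  have [measurable]: "f \<in> borel_measurable ?M"
    using assms(2) by (rule borel_measurable_restrict_lborel_of_continuous)
  have "ball x r \<subseteq> {y \<in> space ?M. ereal \<bar>f y\<bar> > Linf_norm \<Omega> f}"
    using ball c(1) by (force simp: space_restrict_space intro: less_trans)
  then have "emeasure ?M (ball x r) \<le> emeasure ?M {y \<in> space ?M. ereal \<bar>f y\<bar> > Linf_norm \<Omega> f}"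
    by (intro emeasure_mono) measurable
  also have "\<dots> = 0" unfolding Linf_norm_def by (rule esssup_zero_measure)
  finally have "emeasure ?M (ball x r) = 0" by simp
  moreover have "emeasure ?M (ball x r) = emeasure lborel (ball x r)"
    using ball assms(1) by (intro emeasure_restrict_space) auto
  ultimately show False using emeasure_lborel_ball_nonzero[OF \<open>r > 0\<close>, of x] by simp
qed

lemma abs_le_Linf_norm_closure:
  fixes f :: "real^'n \<Rightarrow> real"
  assumes "open \<Omega>" "continuous_on (closure \<Omega>) f" "x \<in> closure \<Omega>"
  shows "ereal \<bar>f x\<bar> \<le> Linf_norm \<Omega> f"
proof -
  obtain s where s: "\<And>n. s n \<in> \<Omega>" "s \<longlonglongrightarrow> x"
    using assms(3) unfolding closure_sequential by blast
  have "(\<lambda>n. f (s n)) \<longlonglongrightarrow> f x"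
    by (rule continuous_on_tendsto_compose[OF assms(2) s(2) assms(3)])
      (use s(1) closure_subset in \<open>auto intro: always_eventually\<close>)
  then have "(\<lambda>n. ereal \<bar>f (s n)\<bar>) \<longlonglongrightarrow> ereal \<bar>f x\<bar>" by (intro tendsto_intros)
  moreover have "continuous_on \<Omega> f" using assms(2) closure_subset by (rule continuous_on_subset)
  then have "ereal \<bar>f (s n)\<bar> \<le> Linf_norm \<Omega> f" for n using abs_le_Linf_norm[OF assms(1)] s(1) by blast
  ultimately show ?thesis by (meson LIMSEQ_le_const2)
qed

lemma Linf_norm_le_of_continuous:
  fixes f :: "real^'n \<Rightarrow> real"
  assumes "continuous_on \<Omega> f" "\<And>x. x \<in> \<Omega> \<Longrightarrow> ereal \<bar>f x\<bar> \<le> c"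
  shows "Linf_norm \<Omega> f \<le> c"
  unfolding Linf_norm_def
proof (rule esssup_I)
  have "f \<in> borel_measurable (restrict_space lborel \<Omega>)"
    using assms(1) by (rule borel_measurable_restrict_lborel_of_continuous)
  then show "(\<lambda>y. ereal \<bar>f y\<bar>) \<in> borel_measurable (restrict_space lborel \<Omega>)" by measurable
  show "AE x in restrict_space lborel \<Omega>. ereal \<bar>f x\<bar> \<le> c"
    by (intro AE_I2) (auto simp: space_restrict_space assms(2))
qed

lemma Linf_norm_eq_SUP_dense:
  fixes f :: "real^'n \<Rightarrow> real"
  assumes "open \<Omega>" "continuous_on \<Omega> f" "D \<subseteq> \<Omega>" "\<Omega> \<subseteq> closure D"
  shows "Linf_norm \<Omega> f = (SUP d\<in>D. ereal \<bar>f d\<bar>)"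
proof (rule antisym)
  have "ereal \<bar>f x\<bar> \<le> (SUP d\<in>D. ereal \<bar>f d\<bar>)" if x: "x \<in> \<Omega>" for x
  proof -
    have "x \<in> closure D" using assms(4) x by blast
    then obtain s where s: "\<And>n. s n \<in> D" "s \<longlonglongrightarrow> x"
      unfolding closure_sequential by blast
    have "(\<lambda>n. f (s n)) \<longlonglongrightarrow> f x"
      by (rule continuous_on_tendsto_compose[OF assms(2) s(2) x]) (use s(1) assms(3) in \<open>auto intro: always_eventually\<close>)
    then have "(\<lambda>n. ereal \<bar>f (s n)\<bar>) \<longlonglongrightarrow> ereal \<bar>f x\<bar>"
      by (intro tendsto_intros)
    moreover have "ereal \<bar>f (s n)\<bar> \<le> (SUP d\<in>D. ereal \<bar>f d\<bar>)" for n
      using s(1) by (rule SUP_upper)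
    ultimately show ?thesis by (meson LIMSEQ_le_const2)
  qed
  then show "Linf_norm \<Omega> f \<le> (SUP d\<in>D. ereal \<bar>f d\<bar>)"
    using assms(2) by (rule Linf_norm_le_of_continuous[rotated])
  show "(SUP d\<in>D. ereal \<bar>f d\<bar>) \<le> Linf_norm \<Omega> f"
    using abs_le_Linf_norm[OF assms(1,2)] assms(3) by (auto intro!: SUP_least)
qed

lemma borel_measurable_Linf_norm_slices:
  fixes \<phi> :: "real \<Rightarrow> real^'n \<Rightarrow> real"
  assumes "open \<Omega>" and cont: "continuous_on ({0..T} \<times> closure \<Omega>) (\<lambda>(t, x). \<phi> t x)"
  shows "(\<lambda>t. Linf_norm \<Omega> (\<phi> t)) \<in> borel_measurable (restrict_space lborel {0<..<T})"
proof -
  obtain D where "countable D" "D \<subseteq> \<Omega>" "\<Omega> \<subseteq> closure D" using separable by blast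
  have "continuous_on \<Omega> (\<phi> t)" if "t \<in> {0<..<T}" for t
  proof (rule continuous_on_subset[OF _ closure_subset])
    show "continuous_on (closure \<Omega>) (\<phi> t)" using continuous_on_slice_snd[OF cont, of t] that by simp
  qed
  then have SUP_eq: "Linf_norm \<Omega> (\<phi> t) = (SUP d\<in>D. ereal \<bar>\<phi> t d\<bar>)"
    if "t \<in> space (restrict_space lborel {0<..<T})" for t
    using Linf_norm_eq_SUP_dense[OF \<open>open \<Omega>\<close> _ \<open>D \<subseteq> \<Omega>\<close> \<open>\<Omega> \<subseteq> closure D\<close>] that
    by (auto simp: space_restrict_space)
  have "(\<lambda>t. SUP d\<in>D. ereal \<bar>\<phi> t d\<bar>) \<in> borel_measurable (restrict_space lborel {0<..<T})"
  proof (rule borel_measurable_SUP[OF \<open>countable D\<close>])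
    fix d assume "d \<in> D"
    then have "d \<in> closure \<Omega>" using \<open>D \<subseteq> \<Omega>\<close> closure_subset by blast
    have "continuous_on {0<..<T} (\<lambda>t. \<phi> t d)"
      using continuous_on_slice_fst[OF cont \<open>d \<in> closure \<Omega>\<close>] by (rule continuous_on_subset) auto
    then have [measurable]: "(\<lambda>t. \<phi> t d) \<in> borel_measurable (restrict_space lborel {0<..<T})"
      by (rule borel_measurable_restrict_lborel_of_continuous)
    show "(\<lambda>t. ereal \<bar>\<phi> t d\<bar>) \<in> borel_measurable (restrict_space lborel {0<..<T})" by measurable
  qed
  then show ?thesis
    using measurable_cong[where M = "restrict_space lborel {0<..<T}" and f = "\<lambda>t. Linf_norm \<Omega> (\<phi> t)", OF SUP_eq]
    by blast
qed

lemma nonpos_at_closure_point_above_level: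
  fixes E \<phi> :: "'a::metric_space \<Rightarrow> real"
  assumes "continuous_on (closure \<Omega>) E" "continuous_on (closure \<Omega>) \<phi>"
    and nonpos: "\<And>y. y \<in> \<Omega> \<Longrightarrow> \<phi> y \<ge> c \<Longrightarrow> E y \<le> 0"
    and x: "x \<in> closure \<Omega>" "\<phi> x > c"
  shows "E x \<le> 0"
proof -
  obtain \<delta> where "\<delta> > 0" and \<delta>: "\<And>y. y \<in> closure \<Omega> \<Longrightarrow> dist y x < \<delta> \<Longrightarrow> dist (\<phi> y) (\<phi> x) < \<phi> x - c"
    using assms(2) x unfolding continuous_on_iff by (metis diff_gt_0_iff_gt)
  show ?thesis
  proof (rule continuous_le_on_closure[where S = "\<Omega> \<inter> ball x \<delta>"])
    show "continuous_on (closure (\<Omega> \<inter> ball x \<delta>)) E"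
      using assms(1) by (rule continuous_on_subset) (simp add: closure_mono)
    show "x \<in> closure (\<Omega> \<inter> ball x \<delta>)"
      using open_Int_closure_subset[of "ball x \<delta>" \<Omega>] x \<open>\<delta> > 0\<close> by (auto simp: Int_commute)
    fix y assume y: "y \<in> \<Omega> \<inter> ball x \<delta>"
    then have "y \<in> closure \<Omega>" "dist y x < \<delta>" using closure_subset by (auto simp: dist_commute)
    then have "dist (\<phi> y) (\<phi> x) < \<phi> x - c" by (rule \<delta>)
    then show "E y \<le> 0" using nonpos y by (auto simp: dist_real_def)
  qed
qed

lemma time_derivative_at_one_sided_maximum:
  fixes \<phi> \<phi>t :: "real \<Rightarrow> 'a::metric_space \<Rightarrow> real"
  assumes cont: "continuous_on ({0..T} \<times> closure \<Omega>) (\<lambda>(t, x). \<phi> t x)"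
      "continuous_on ({0..T} \<times> closure \<Omega>) (\<lambda>(t, x). \<phi>t t x)"
    and deriv: "\<And>t x. t \<in> {0<..<T} \<Longrightarrow> x \<in> \<Omega> \<Longrightarrow> ((\<lambda>s. \<phi> s x) has_real_derivative \<phi>t t x) (at t)"
    and t1: "0 < t1" "t1 < T" and x1: "x1 \<in> closure \<Omega>"
    and max: "\<And>s. 0 \<le> s \<Longrightarrow> s \<le> t1 \<Longrightarrow> \<phi> s x1 - \<epsilon> * s \<le> \<phi> t1 x1 - \<epsilon> * t1"
  shows "\<phi>t t1 x1 \<ge> \<epsilon>"
proof (rule ccontr)
  assume "\<not> \<phi>t t1 x1 \<ge> \<epsilon>"
  define \<eta> where "\<eta> = (\<epsilon> - \<phi>t t1 x1) / 2"
  have "\<eta> > 0" using \<open>\<not> \<phi>t t1 x1 \<ge> \<epsilon>\<close> by (simp add: \<eta>_def)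
  obtain d where "d > 0" and d: "\<And>p. p \<in> {0..T} \<times> closure \<Omega> \<Longrightarrow> dist p (t1, x1) < d \<Longrightarrow>
      dist ((\<lambda>(t, x). \<phi>t t x) p) (\<phi>t t1 x1) < \<eta>"
    using cont(2) t1 x1 \<open>\<eta> > 0\<close> unfolding continuous_on_iff by fastforce
  have near: "\<phi>t z y < \<phi>t t1 x1 + \<eta>"
    if "z \<in> {0..T}" "y \<in> closure \<Omega>" "\<bar>z - t1\<bar> < d / 2" "dist y x1 < d / 2" for z y
  proof -
    have "dist (z, y) (t1, x1) \<le> \<bar>dist z t1\<bar> + \<bar>dist y x1\<bar>"
      unfolding dist_Pair_Pair by (rule sqrt_sum_squares_le_sum_abs)
    also have "\<dots> < d" using that by (simp add: dist_real_def)
    finally show ?thesis using d[of "(z, y)"] that by (simp add: dist_real_def)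
  qed
  define h where "h = min (d / 2) t1 / 2"
  have h: "0 < h" "h < t1" "h < d / 2" using \<open>d > 0\<close> t1 by (auto simp: h_def)
  have mvt_bound: "\<phi> t1 y - \<phi> (t1 - h) y \<le> h * (\<phi>t t1 x1 + \<eta>)" if y: "y \<in> \<Omega> \<inter> ball x1 (d / 2)" for y
  proof -
    have "y \<in> closure \<Omega>" using y closure_subset by auto
    obtain z where z: "t1 - h < z" "z < t1" "\<phi> t1 y - \<phi> (t1 - h) y = h * \<phi>t z y"
      using MVT2[of "t1 - h" t1 "\<lambda>s. \<phi> s y" "\<lambda>s. \<phi>t s y"] deriv y h t1 by force
    moreover have "\<phi>t z y < \<phi>t t1 x1 + \<eta>"
      using near[of z y] z h t1 y \<open>y \<in> closure \<Omega>\<close> by (auto simp: dist_commute)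
    ultimately show ?thesis using h by simp
  qed
  have x1_closure: "x1 \<in> closure (\<Omega> \<inter> ball x1 (d / 2))"
    using open_Int_closure_subset[of "ball x1 (d / 2)" \<Omega>] x1 \<open>d > 0\<close> by (auto simp: Int_commute)
  have cont_diff: "continuous_on (closure (\<Omega> \<inter> ball x1 (d / 2))) (\<lambda>y. \<phi> t1 y - \<phi> (t1 - h) y)"
  proof -
    have "closure (\<Omega> \<inter> ball x1 (d / 2)) \<subseteq> closure \<Omega>" by (simp add: closure_mono)
    moreover have "continuous_on (closure \<Omega>) (\<lambda>y. \<phi> t1 y - \<phi> (t1 - h) y)"
      using continuous_on_slice_snd[OF cont(1), of t1] continuous_on_slice_snd[OF cont(1), of "t1 - h"] t1 h
      by (intro continuous_intros) auto
    ultimately show ?thesis by (rule continuous_on_subset[rotated])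
  qed
  have "\<phi> t1 x1 - \<phi> (t1 - h) x1 \<le> h * (\<phi>t t1 x1 + \<eta>)"
    using continuous_le_on_closure[OF cont_diff x1_closure mvt_bound] by simp
  moreover have "\<epsilon> * h \<le> \<phi> t1 x1 - \<phi> (t1 - h) x1" using max[of "t1 - h"] h by (simp add: algebra_simps)
  moreover have "h * (\<phi>t t1 x1 + \<eta>) = \<epsilon> * h - h * \<eta>" by (simp add: \<eta>_def algebra_simps)
  moreover have "h * \<eta> > 0" using h \<open>\<eta> > 0\<close> by simp
  ultimately show False by linarith
qed

definition regular_with_neumann_bc ::
  "(real^'n) set \<Rightarrow> (real^'n \<Rightarrow> real^'n) \<Rightarrow> real \<Rightarrow> (real \<Rightarrow> real^'n \<Rightarrow> real) \<Rightarrow> (real \<Rightarrow> real^'n \<Rightarrow> real)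
   \<Rightarrow> (real \<Rightarrow> real^'n \<Rightarrow> real^'n) \<Rightarrow> (real \<Rightarrow> real^'n \<Rightarrow> real^'n^'n) \<Rightarrow> bool" where
  "regular_with_neumann_bc \<Omega> nrm T \<phi> \<phi>t \<phi>x \<phi>xx \<longleftrightarrow>
     continuous_on ({0..T} \<times> closure \<Omega>) (\<lambda>(t, x). \<phi> t x) \<and>
     continuous_on ({0..T} \<times> closure \<Omega>) (\<lambda>(t, x). \<phi>t t x) \<and>
     continuous_on ({0..T} \<times> closure \<Omega>) (\<lambda>(t, x). \<phi>x t x) \<and>
     continuous_on ({0..T} \<times> closure \<Omega>) (\<lambda>(t, x). \<phi>xx t x) \<and>
     (\<forall>t\<in>{0<..<T}. \<forall>x\<in>\<Omega>.
        ((\<lambda>s. \<phi> s x) has_real_derivative \<phi>t t x) (at t) \<and>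
        ((\<lambda>y. \<phi> t y) has_derivative (\<lambda>h. \<phi>x t x \<bullet> h)) (at x) \<and>
        ((\<lambda>y. \<phi>x t y) has_derivative (\<lambda>h. \<phi>xx t x *v h)) (at x)) \<and>
     (\<forall>t\<in>{0..T}. \<forall>x\<in>frontier \<Omega>. \<phi>x t x \<bullet> nrm x = 0)"

definition subsolution_above ::
  "(real^'n) set \<Rightarrow> (real^'n \<Rightarrow> real^'n) \<Rightarrow> real \<Rightarrow> real \<Rightarrow> (real \<Rightarrow> real^'n \<Rightarrow> real^'n) \<Rightarrow> real
   \<Rightarrow> (real \<Rightarrow> real^'n \<Rightarrow> real) \<Rightarrow> bool" where
  "subsolution_above \<Omega> nrm T A0 v c \<phi> \<longleftrightarrow>
     (\<exists>\<phi>t \<phi>x \<phi>xx. regular_with_neumann_bc \<Omega> nrm T \<phi> \<phi>t \<phi>x \<phi>xx \<and>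
        (\<forall>t\<in>{0<..<T}. \<forall>x\<in>\<Omega>. \<phi> t x \<ge> c \<longrightarrow>
           \<phi>t t x + v t x \<bullet> \<phi>x t x - A0 * (\<Sum>i\<in>UNIV. \<phi>xx t x $ i $ i) \<le> 0))"

lemma operator_ge_at_penalized_maximum:
  fixes \<phi> :: "real \<Rightarrow> real^'n \<Rightarrow> real"
  assumes "open \<Omega>" "C11_boundary_with_normal \<Omega> nrm" "A0 \<ge> 0"
    and reg: "regular_with_neumann_bc \<Omega> nrm T \<phi> \<phi>t \<phi>x \<phi>xx"
    and t1: "t1 \<in> {0<..<T}" and x1: "x1 \<in> closure \<Omega>"
    and max: "\<And>s y. s \<in> {0..t1} \<Longrightarrow> y \<in> closure \<Omega> \<Longrightarrow> \<phi> s y - \<epsilon> * s \<le> \<phi> t1 x1 - \<epsilon> * t1"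
  shows "\<phi>t t1 x1 + v \<bullet> \<phi>x t1 x1 - A0 * (\<Sum>i\<in>UNIV. \<phi>xx t1 x1 $ i $ i) \<ge> \<epsilon>"
proof -
  note reg = reg[unfolded regular_with_neumann_bc_def]
  have t1': "t1 \<in> {0..T}" using t1 by simp
  have "\<phi>t t1 x1 \<ge> \<epsilon>"
    using time_derivative_at_one_sided_maximum[of T \<Omega> \<phi> \<phi>t t1 x1 \<epsilon>] reg t1 x1 max by auto
  moreover have "\<phi>x t1 x1 = 0" and diag: "\<phi>xx t1 x1 $ i $ i \<le> 0" for i
  proof -
    have "norm (nrm x1) = 1 \<and> \<phi>x t1 x1 \<bullet> nrm x1 = 0 \<and> (\<forall>e. e \<bullet> nrm x1 < 0 \<longrightarrow> enters_along \<Omega> x1 e)"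
      if "x1 \<notin> \<Omega>"
    proof -
      have "x1 \<in> frontier \<Omega>" using x1 that \<open>open \<Omega>\<close> by (simp add: frontier_def interior_open)
      then show ?thesis
        using C11_boundary_inward_directions[OF assms(2) x1 that] reg t1' by blast
    qed
    then have "x1 \<notin> \<Omega> \<Longrightarrow> nrm x1 \<noteq> 0 \<and> \<phi>x t1 x1 \<bullet> nrm x1 = 0 \<and> (\<forall>e. e \<bullet> nrm x1 < 0 \<longrightarrow> enters_along \<Omega> x1 e)"
      by auto
    moreover have "continuous_on (closure \<Omega>) (\<phi> t1)" "continuous_on (closure \<Omega>) (\<phi>x t1)"
      "continuous_on (closure \<Omega>) (\<phi>xx t1)"
      using reg by (auto intro: continuous_on_slice_snd[OF _ t1'])
    moreover have "\<phi> t1 y \<le> \<phi> t1 x1" if "y \<in> closure \<Omega>" for y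
      using max[OF _ that, of t1] t1 by simp
    ultimately show "\<phi>x t1 x1 = 0" "\<phi>xx t1 x1 $ i $ i \<le> 0"
      using gradient_and_hessian_at_maximum[OF \<open>open \<Omega>\<close>,
          where f = "\<phi> t1" and fx = "\<phi>x t1" and fxx = "\<phi>xx t1" and x = x1 and n = "nrm x1"]
        reg t1 x1 by auto
  qed
  moreover have "A0 * (\<Sum>i\<in>UNIV. \<phi>xx t1 x1 $ i $ i) \<le> 0"
    using diag \<open>A0 \<ge> 0\<close> by (simp add: mult_nonneg_nonpos sum_nonpos)
  ultimately show ?thesis by simp
qed

lemma operator_nonpos_at_closure_point_above_level:
  fixes \<phi> :: "real \<Rightarrow> real^'n \<Rightarrow> real" and v :: "real \<Rightarrow> real^'n \<Rightarrow> real^'n"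
  assumes reg: "regular_with_neumann_bc \<Omega> nrm T \<phi> \<phi>t \<phi>x \<phi>xx"
    and v: "continuous_on ({0..T} \<times> closure \<Omega>) (\<lambda>(t, x). v t x)"
    and nonpos: "\<And>t x. t \<in> {0<..<T} \<Longrightarrow> x \<in> \<Omega> \<Longrightarrow> \<phi> t x \<ge> c \<Longrightarrow>
                   \<phi>t t x + v t x \<bullet> \<phi>x t x - A0 * (\<Sum>i\<in>UNIV. \<phi>xx t x $ i $ i) \<le> 0"
    and s: "s \<in> {0<..<T}" and y: "y \<in> closure \<Omega>" "\<phi> s y > c"
  shows "\<phi>t s y + v s y \<bullet> \<phi>x s y - A0 * (\<Sum>i\<in>UNIV. \<phi>xx s y $ i $ i) \<le> 0"
proof (rule nonpos_at_closure_point_above_level[where \<phi> = "\<phi> s" and c = c])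
  have "s \<in> {0..T}" using s by simp
  note slice = continuous_on_slice_snd[OF _ this]
  have cont: "continuous_on ({0..T} \<times> closure \<Omega>) (\<lambda>(t, x). \<phi> t x)"
    "continuous_on ({0..T} \<times> closure \<Omega>) (\<lambda>(t, x). \<phi>t t x)"
    "continuous_on ({0..T} \<times> closure \<Omega>) (\<lambda>(t, x). \<phi>x t x)"
    "continuous_on ({0..T} \<times> closure \<Omega>) (\<lambda>(t, x). \<phi>xx t x)"
    using reg unfolding regular_with_neumann_bc_def by blast+
  show "continuous_on (closure \<Omega>) (\<phi> s)" using slice[OF cont(1)] .
  show "continuous_on (closure \<Omega>) (\<lambda>y. \<phi>t s y + v s y \<bullet> \<phi>x s y - A0 * (\<Sum>i\<in>UNIV. \<phi>xx s y $ i $ i))"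
    using slice[OF cont(2)] slice[OF cont(3)] slice[OF cont(4)] slice[OF v]
    by (intro continuous_intros) auto
qed (use nonpos s y in auto)

lemma subsolution_above_le:
  fixes \<phi> :: "real \<Rightarrow> real^'n \<Rightarrow> real" and v :: "real \<Rightarrow> real^'n \<Rightarrow> real^'n"
  assumes "open \<Omega>" "bounded \<Omega>" "C11_boundary_with_normal \<Omega> nrm" "A0 \<ge> 0"
    and v: "continuous_on ({0..T} \<times> closure \<Omega>) (\<lambda>(t, x). v t x)"
    and sub: "subsolution_above \<Omega> nrm T A0 v c \<phi>"
    and init: "\<And>x. x \<in> closure \<Omega> \<Longrightarrow> \<phi> 0 x \<le> M" and "c \<le> M"
    and t: "t \<in> {0<..<T}" and x: "x \<in> closure \<Omega>"
  shows "\<phi> t x \<le> M"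
proof -
  obtain \<phi>t \<phi>x \<phi>xx where reg: "regular_with_neumann_bc \<Omega> nrm T \<phi> \<phi>t \<phi>x \<phi>xx"
    and nonpos: "\<And>t x. t \<in> {0<..<T} \<Longrightarrow> x \<in> \<Omega> \<Longrightarrow> \<phi> t x \<ge> c \<Longrightarrow>
                   \<phi>t t x + v t x \<bullet> \<phi>x t x - A0 * (\<Sum>i\<in>UNIV. \<phi>xx t x $ i $ i) \<le> 0"
    using sub unfolding subsolution_above_def by blast
  have cont: "continuous_on ({0..T} \<times> closure \<Omega>) (\<lambda>(t, x). \<phi> t x)"
    using reg unfolding regular_with_neumann_bc_def by blast
  define L where "L s y = \<phi>t s y + v s y \<bullet> \<phi>x s y - A0 * (\<Sum>i\<in>UNIV. \<phi>xx s y $ i $ i)" for s y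
  have L_nonpos: "L s y \<le> 0" if "s \<in> {0<..<T}" "y \<in> closure \<Omega>" "\<phi> s y > c" for s y
    unfolding L_def by (rule operator_nonpos_at_closure_point_above_level[OF reg v nonpos that])
  have penalized: "\<phi> t x \<le> M + \<epsilon> * t" if "\<epsilon> > 0" for \<epsilon>
  proof (rule ccontr)
    assume "\<not> \<phi> t x \<le> M + \<epsilon> * t"
    define S where "S = {0..t} \<times> closure \<Omega>"
    have "compact S" using \<open>bounded \<Omega>\<close> by (auto simp: S_def compact_closure intro!: compact_Times)
    moreover have "S \<noteq> {}" using t x by (auto simp: S_def)
    moreover have "continuous_on S (\<lambda>p. (\<lambda>(s, y). \<phi> s y) p - \<epsilon> * fst p)"
      using t by (intro continuous_intros continuous_on_subset[OF cont]) (auto simp: S_def)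
    ultimately obtain t1 x1 where "(t1, x1) \<in> S"
      and max: "\<And>s y. (s, y) \<in> S \<Longrightarrow> \<phi> s y - \<epsilon> * s \<le> \<phi> t1 x1 - \<epsilon> * t1"
      using continuous_attains_sup[of S] by fastforce
    then have t1: "t1 \<in> {0..t}" and x1: "x1 \<in> closure \<Omega>" by (auto simp: S_def)
    have above: "\<phi> t1 x1 - \<epsilon> * t1 > M"
      using max[of t x] \<open>\<not> \<phi> t x \<le> M + \<epsilon> * t\<close> t x by (auto simp: S_def)
    have "t1 \<noteq> 0" using above init[OF x1] by auto
    then have t1': "t1 \<in> {0<..<T}" using t1 t by auto
    have "\<epsilon> * t1 \<ge> 0" using t1 \<open>\<epsilon> > 0\<close> by simp
    then have "\<phi> t1 x1 > c" using above \<open>c \<le> M\<close> by linarith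
    then have "L t1 x1 \<le> 0" using L_nonpos t1' x1 by blast
    moreover have "L t1 x1 \<ge> \<epsilon>"
      unfolding L_def
      by (rule operator_ge_at_penalized_maximum[OF assms(1,3,4) reg t1' x1]) (use max t1 in \<open>auto simp: S_def\<close>)
    ultimately show False using \<open>\<epsilon> > 0\<close> by simp
  qed
  show ?thesis
  proof (rule field_le_epsilon)
    fix e :: real assume "e > 0"
    then show "\<phi> t x \<le> M + e" using penalized[of "e / t"] t by simp
  qed
qed

lemma continuous_on_lipschitz_halfline:
  fixes \<tau> :: "real \<Rightarrow> real"
  assumes "\<exists>L. \<forall>a\<ge>r0. \<forall>b\<ge>r0. \<bar>\<tau> a - \<tau> b\<bar> \<le> L * \<bar>a - b\<bar>"
  shows "continuous_on {r0..} \<tau>"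
proof -
  obtain L where L: "\<forall>a\<ge>r0. \<forall>b\<ge>r0. \<bar>\<tau> a - \<tau> b\<bar> \<le> L * \<bar>a - b\<bar>" using assms by blast
  have "\<bar>L\<bar>-lipschitz_on {r0..} \<tau>"
  proof (rule lipschitz_onI)
    fix a b :: real assume "a \<in> {r0..}" "b \<in> {r0..}"
    then have "\<bar>\<tau> a - \<tau> b\<bar> \<le> L * \<bar>a - b\<bar>" using L by simp
    also have "\<dots> \<le> \<bar>L\<bar> * \<bar>a - b\<bar>" by (simp add: mult_right_mono)
    finally show "dist (\<tau> a) (\<tau> b) \<le> \<bar>L\<bar> * dist a b" by (simp add: dist_real_def)
  qed simp
  then show ?thesis by (rule lipschitz_on_continuous_on)
qed

lemma classical_solution_monomer_subsolution:
  fixes \<Omega> :: "(real^'n) set" and \<psi> :: "real \<Rightarrow> real^'n \<Rightarrow> real \<Rightarrow> real"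
  assumes r0: "r0 > 0" and K: "K > 0"
    and \<tau>_mono: "mono_on {r0..} \<tau>" and \<tau>_nonneg: "\<forall>r\<ge>r0. \<tau> r \<ge> 0"
    and \<tau>_lip: "\<exists>L. \<forall>a\<ge>r0. \<forall>b\<ge>r0. \<bar>\<tau> a - \<tau> b\<bar> \<le> L * \<bar>a - b\<bar>"
    and \<tau>_ineq: "AE r in lborel. r > r0 \<longrightarrow> \<tau> differentiable (at r) \<and>
                  r0 / K \<le> \<tau> r + r * deriv \<tau> r \<and> \<tau> r + deriv \<tau> r + r * deriv \<tau> r + \<tau> r / r \<le> K"
    and \<beta>: "\<forall>r>r0. \<forall>u D. 0 < \<beta> r u D \<and> \<beta> r u D \<le> K"
    and \<kappa>: "\<forall>r rt. \<kappa> r rt = (if rt > r0 \<and> 0 < r \<and> r < rt then 1 / rt else 0)"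
    and sol: "classical_solution \<Omega> nrm T r0 A0 A \<tau> \<beta> \<kappa> v \<psi>0 \<phi>0 \<psi> \<phi>"
    and \<psi>_nonneg: "\<forall>t\<in>{0..T}. \<forall>x\<in>closure \<Omega>. \<forall>r\<in>{r0..}. \<psi> t x r \<ge> 0"
  shows "subsolution_above \<Omega> nrm T A0 v (K\<^sup>2) \<phi>"
proof -
  obtain \<psi>t \<psi>r :: "real \<Rightarrow> real^'n \<Rightarrow> real \<Rightarrow> real"
    and \<psi>x :: "real \<Rightarrow> real^'n \<Rightarrow> real \<Rightarrow> real^'n" and \<psi>xx :: "real \<Rightarrow> real^'n \<Rightarrow> real \<Rightarrow> real^'n^'n"
    and \<phi>t \<phi>x \<phi>xx where
    \<psi>_cont: "continuous_on ({0..T} \<times> closure \<Omega> \<times> {r0..}) (\<lambda>(t, x, r). \<psi> t x r)"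
    and decay: "\<forall>m::real. m \<ge> 0 \<longrightarrow> (\<exists>C. \<forall>t\<in>{0..T}. \<forall>x\<in>closure \<Omega>. \<forall>r\<in>{r0..}.
        (1 + r) powr m * (\<bar>\<psi> t x r\<bar> + \<bar>\<psi>t t x r\<bar> + \<bar>\<psi>r t x r\<bar> + norm (\<psi>x t x r)
                          + norm (\<psi>xx t x r)) \<le> C)"
    and \<phi>_cont: "continuous_on ({0..T} \<times> closure \<Omega>) (\<lambda>(t, x). \<phi> t x)"
      "continuous_on ({0..T} \<times> closure \<Omega>) (\<lambda>(t, x). \<phi>t t x)"
      "continuous_on ({0..T} \<times> closure \<Omega>) (\<lambda>(t, x). \<phi>x t x)"
      "continuous_on ({0..T} \<times> closure \<Omega>) (\<lambda>(t, x). \<phi>xx t x)"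
    and \<phi>_deriv: "\<forall>t\<in>{0<..<T}. \<forall>x\<in>\<Omega>.
        ((\<lambda>s. \<phi> s x) has_real_derivative \<phi>t t x) (at t) \<and>
        ((\<lambda>y. \<phi> t y) has_derivative (\<lambda>h. \<phi>x t x \<bullet> h)) (at x) \<and>
        ((\<lambda>y. \<phi>x t y) has_derivative (\<lambda>h. \<phi>xx t x *v h)) (at x)"
    and \<phi>_bc: "\<forall>t\<in>{0..T}. \<forall>x\<in>frontier \<Omega>. \<phi>x t x \<bullet> nrm x = 0"
    and monomer: "\<forall>t\<in>{0<..<T}. \<forall>x\<in>\<Omega>.
        \<phi>t t x + v t x \<bullet> \<phi>x t x - A0 * (\<Sum>i\<in>UNIV. \<phi>xx t x $ i $ i)
        = - \<phi> t x * (LINT r:{r0..}|lborel. (\<tau> r + r * deriv \<tau> r) * \<psi> t x r)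
          + 2 * (LINT r:{0..r0}|lborel. r *
                   (LINT rt:{r0..}|lborel. \<beta> rt (v t x) (symgrad v t x) * \<kappa> r rt * \<psi> t x rt))"
    using sol unfolding classical_solution_def by (elim exE conjE) (rule that; assumption)
  have reg: "regular_with_neumann_bc \<Omega> nrm T \<phi> \<phi>t \<phi>x \<phi>xx"
    unfolding regular_with_neumann_bc_def using \<phi>_cont \<phi>_deriv \<phi>_bc by blast
  have \<tau>_cont: "continuous_on {r0..} \<tau>" using \<tau>_lip by (rule continuous_on_lipschitz_halfline)
  obtain C where C: "\<forall>t\<in>{0..T}. \<forall>x\<in>closure \<Omega>. \<forall>r\<in>{r0..}.
      (1 + r) powr 2 * (\<bar>\<psi> t x r\<bar> + \<bar>\<psi>t t x r\<bar> + \<bar>\<psi>r t x r\<bar> + norm (\<psi>x t x r) + norm (\<psi>xx t x r)) \<le> C"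
    using decay by force
  have "\<phi>t t x + v t x \<bullet> \<phi>x t x - A0 * (\<Sum>i\<in>UNIV. \<phi>xx t x $ i $ i) \<le> 0"
    if t: "t \<in> {0<..<T}" and x: "x \<in> \<Omega>" and large: "\<phi> t x \<ge> K\<^sup>2" for t x
  proof -
    have tx: "t \<in> {0..T}" "x \<in> closure \<Omega>" using t x closure_subset by auto
    have "continuous_on {r0..} (\<lambda>r. (\<lambda>(t, x, r). \<psi> t x r) (t, x, r))"
      by (rule continuous_on_compose2[OF \<psi>_cont]) (use tx in \<open>auto intro!: continuous_intros\<close>)
    then have \<psi>_slice: "continuous_on {r0..} (\<psi> t x)" by simp
    have \<psi>_decay: "r\<^sup>2 * \<bar>\<psi> t x r\<bar> \<le> C" if "r \<ge> r0" for r
    proof -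
      have "r\<^sup>2 \<le> (1 + r) powr 2" using that r0 by (simp add: powr_realpow power_mono)
      then have "r\<^sup>2 * \<bar>\<psi> t x r\<bar> \<le> (1 + r) powr 2 * \<bar>\<psi> t x r\<bar>" by (rule mult_right_mono) simp
      also have "\<dots> \<le> (1 + r) powr 2 * (\<bar>\<psi> t x r\<bar> + \<bar>\<psi>t t x r\<bar> + \<bar>\<psi>r t x r\<bar> + norm (\<psi>x t x r)
                                       + norm (\<psi>xx t x r))"
        by (intro mult_left_mono) auto
      also have "\<dots> \<le> C" using C tx that by simp
      finally show ?thesis .
    qed
    have "- \<phi> t x * (LINT r:{r0..}|lborel. (\<tau> r + r * deriv \<tau> r) * \<psi> t x r)
          + 2 * (LINT r:{0..r0}|lborel. r *
                   (LINT rt:{r0..}|lborel. \<beta> rt (v t x) (symgrad v t x) * \<kappa> r rt * \<psi> t x rt)) \<le> 0"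
      using \<beta> \<psi>_nonneg tx
      by (intro monomer_source_nonpos[OF r0 K \<tau>_cont \<tau>_mono \<tau>_nonneg \<tau>_ineq \<kappa> _ _ \<psi>_slice _ \<psi>_decay large])
        (auto simp: less_imp_le)
    then show ?thesis using monomer t x by simp
  qed
  then show ?thesis unfolding subsolution_above_def using reg by blast
qed

theorem lemma3p2:
  fixes \<Omega> :: "(real^'n) set" and nrm :: "real^'n \<Rightarrow> real^'n"
    and T r0 K A0 :: real
    and A \<tau> :: "real \<Rightarrow> real"
    and \<beta> :: "real \<Rightarrow> real^'n \<Rightarrow> real^'n^'n \<Rightarrow> real"
    and \<kappa> :: "real \<Rightarrow> real \<Rightarrow> real"
    and v :: "real \<Rightarrow> real^'n \<Rightarrow> real^'n"
    and \<psi>0 :: "real^'n \<Rightarrow> real \<Rightarrow> real" and \<phi>0 :: "real^'n \<Rightarrow> real"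
    and \<psi> :: "real \<Rightarrow> real^'n \<Rightarrow> real \<Rightarrow> real" and \<phi> :: "real \<Rightarrow> real^'n \<Rightarrow> real"
  assumes dim: "CARD('n) = 2 \<or> CARD('n) = 3"
    and T_pos: "T > 0" and r0_pos: "r0 > 0" and K_pos: "K > 0" and A0_pos: "A0 > 0"
    and dom: "bounded_C11_domain \<Omega> nrm"
    \<comment> \<open>(A1)\<close>
    and A1: "continuous_on {r0<..} A" "\<forall>r>r0. A r > 0" "antimono_on {r0<..} A"
            "(A \<longlongrightarrow> 0) at_top"
    \<comment> \<open>(A2)\<close>
    and A2_mono: "mono_on {r0..} \<tau>" and A2_nonneg: "\<forall>r\<ge>r0. \<tau> r \<ge> 0"
    and A2_bdd: "\<exists>B. \<forall>r\<ge>r0. \<bar>\<tau> r\<bar> \<le> B"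
    and A2_lip: "\<exists>L. \<forall>a\<ge>r0. \<forall>b\<ge>r0. \<bar>\<tau> a - \<tau> b\<bar> \<le> L * \<bar>a - b\<bar>"
    and A2_r0: "\<tau> r0 = 0"
    and A2_d0: "\<exists>d. (\<tau> has_real_derivative d) (at_right r0) \<and> d > 0 \<and>
                  r0 / K \<le> \<tau> r0 + r0 * d \<and> \<tau> r0 + d + r0 * d + \<tau> r0 / r0 \<le> K"
    and A2_ineq: "AE r in lborel. r > r0 \<longrightarrow>
                  \<tau> differentiable (at r) \<and>
                  r0 / K \<le> \<tau> r + r * deriv \<tau> r \<and>
                  \<tau> r + deriv \<tau> r + r * deriv \<tau> r + \<tau> r / r \<le> K"
    \<comment> \<open>(A3)\<close>
    and A3_smooth: "smooth_on ({r0<..} \<times> UNIV) (\<lambda>(r, u, D). \<beta> r u D)"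
    and A3_incr: "\<forall>u D. mono_on {r0<..} (\<lambda>r. \<beta> r u D)"
    and A3_bounds: "\<forall>r>r0. \<forall>u D. 0 < \<beta> r u D \<and> \<beta> r u D \<le> K"
    and A3_eta_bdd: "\<forall>r>r0. bdd_above {deriv (\<lambda>s. \<beta> s u D) r / \<beta> r u D | u D. True}"
    and A3_eta_meas: "eta \<beta> \<in> borel_measurable (restrict_space lborel {r0<..})"
    and A3_eta_nonneg: "\<forall>r>r0. eta \<beta> r \<ge> 0"
    and A3_eta_decay: "\<forall>r>r0. (1 + r) * eta \<beta> r \<le> K"
    and A3_eta_int: "(\<integral>\<^sup>+ r\<in>{r0<..}. ennreal (eta \<beta> r) \<partial>lborel) \<le> ennreal K"
    \<comment> \<open>(A4)\<close>
    and A4: "\<forall>r rt. \<kappa> r rt = (if rt > r0 \<and> 0 < r \<and> r < rt then 1 / rt else 0)"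
    \<comment> \<open>velocity field\<close>
    and v_C1: "C1_closed_cyl T \<Omega> v"
    and v_div: "\<forall>t\<in>{0<..<T}. \<forall>x\<in>\<Omega>. div_x v t x = 0"
    and v_bdry: "\<forall>t\<in>{0<..<T}. \<forall>x\<in>frontier \<Omega>. v t x \<bullet> nrm x = 0"
    \<comment> \<open>nonnegative classical solution\<close>
    and sol: "classical_solution \<Omega> nrm T r0 A0 A \<tau> \<beta> \<kappa> v \<psi>0 \<phi>0 \<psi> \<phi>"
    and \<psi>_nonneg: "\<forall>t\<in>{0..T}. \<forall>x\<in>closure \<Omega>. \<forall>r\<in>{r0..}. \<psi> t x r \<ge> 0"
    and \<phi>_nonneg: "\<forall>t\<in>{0..T}. \<forall>x\<in>closure \<Omega>. \<phi> t x \<ge> 0"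
    and \<phi>0_Linf: "in_Linf \<Omega> \<phi>0"
  shows "esssup (restrict_space lborel {0<..<T}) (\<lambda>t. Linf_norm \<Omega> (\<phi> t))
           \<le> max (ereal (K\<^sup>2)) (Linf_norm \<Omega> \<phi>0)"
proof -
  have \<Omega>: "open \<Omega>" "bounded \<Omega>" "\<Omega> \<noteq> {}" "C11_boundary_with_normal \<Omega> nrm"
    using dom by (auto simp: bounded_C11_domain_def)
  have \<phi>_cont: "continuous_on ({0..T} \<times> closure \<Omega>) (\<lambda>(t, x). \<phi> t x)"
    using sol unfolding classical_solution_def by (elim exE conjE) assumption
  have init: "\<forall>x\<in>closure \<Omega>. \<phi> 0 x = \<phi>0 x"
    using sol unfolding classical_solution_def by (elim exE conjE) assumption
  have v_cont: "continuous_on ({0..T} \<times> closure \<Omega>) (\<lambda>(t, x). v t x)"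
    using v_C1 unfolding C1_closed_cyl_def by blast
  have "continuous_on (closure \<Omega>) (\<phi> 0)" using continuous_on_slice_snd[OF \<phi>_cont] T_pos by simp
  then have \<phi>0_cont: "continuous_on (closure \<Omega>) \<phi>0" using init by (simp cong: continuous_on_cong)
  obtain x0 where "x0 \<in> \<Omega>" using \<Omega>(3) by blast
  then have "x0 \<in> closure \<Omega>" using closure_subset by blast
  then have "Linf_norm \<Omega> \<phi>0 \<noteq> - \<infinity>"
    using abs_le_Linf_norm_closure[OF \<Omega>(1) \<phi>0_cont] by force
  then obtain m0 where m0: "Linf_norm \<Omega> \<phi>0 = ereal m0"
    using \<phi>0_Linf by (cases "Linf_norm \<Omega> \<phi>0") (auto simp: in_Linf_def)
  define M where "M = max (K\<^sup>2) m0"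
  have init_le: "\<phi> 0 x \<le> M" if "x \<in> closure \<Omega>" for x
    using abs_le_Linf_norm_closure[OF \<Omega>(1) \<phi>0_cont that] init that m0 by (auto simp: M_def)
  have sub: "subsolution_above \<Omega> nrm T A0 v (K\<^sup>2) \<phi>"
    by (rule classical_solution_monomer_subsolution[OF r0_pos K_pos A2_mono A2_nonneg A2_lip A2_ineq
          A3_bounds A4 sol \<psi>_nonneg])
  have bound: "\<phi> t x \<le> M" if "t \<in> {0<..<T}" "x \<in> closure \<Omega>" for t x
    by (rule subsolution_above_le[OF \<Omega>(1,2,4) _ v_cont sub init_le _ that])
      (use A0_pos in \<open>simp_all add: M_def\<close>)
  have "Linf_norm \<Omega> (\<phi> t) \<le> ereal M" if "t \<in> {0<..<T}" for t
  proof (rule Linf_norm_le_of_continuous)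
    show "continuous_on \<Omega> (\<phi> t)"
    proof (rule continuous_on_subset[OF _ closure_subset])
      show "continuous_on (closure \<Omega>) (\<phi> t)"
        using continuous_on_slice_snd[OF \<phi>_cont, of t] that by simp
    qed
    show "ereal \<bar>\<phi> t x\<bar> \<le> ereal M" if "x \<in> \<Omega>" for x
    proof -
      have "x \<in> closure \<Omega>" "t \<in> {0..T}" using that closure_subset \<open>t \<in> {0<..<T}\<close> by auto
      then show ?thesis using bound[OF \<open>t \<in> {0<..<T}\<close>] \<phi>_nonneg by simp
    qed
  qed
  then have "esssup (restrict_space lborel {0<..<T}) (\<lambda>t. Linf_norm \<Omega> (\<phi> t)) \<le> ereal M"
    by (intro esssup_I borel_measurable_Linf_norm_slices[OF \<Omega>(1) \<phi>_cont] AE_I2)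
      (auto simp: space_restrict_space)
  then show ?thesis using m0 by (simp add: M_def)
qed

end
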